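(* Assume $D$ is irreducible and that the burst sizes are geometric: there is $\lambda\in(0,1)$ with $D_r=\lambda^{r-1}D_1$ for all $r\ge1$. Then $C_r=\frac{\lambda^{r-1}}{(1-\lambda)^{r+1}}D_1$ for all $r\ge1$, and for every $m\in\mathbb N$ $$B_m\le\frac1{m!}\Bigl(\frac{\lambda}{1-\lambda}\Bigr)^m\Bigl[\frac{\lVert D_1\rVert_\infty}{\delta\lambda(1-\lambda)}\Bigr]^{(m)}.$$
   Context: Standing model. Fix $N\ge1$, $\delta>0$; rates $a_{i,j}\ge0$ ($i\ne j$) and $b^{[r]}_{i,j}\ge0$ ($r\ge1$). $D_r:=(b^{[r]}_{i,j})$; $D_0$ has off-diagonal entries $a_{i,j}$ and diagonal $a_{i,i}:=-\sum_{k\ne i}a_{i,k}-\sum_k\sum_rb^{[r]}_{i,k}$; $D:=D_0+\sum_{r\ge1}D_r$; $C_r:=\sum_{n\ge r}\binom nrD_n$. For the Markov chain $(S(t),M(t))$ on $\{1,\dots,N\}\times\mathbb N$ with jumps $(i,m)\to(j,m)$ at rate $a_{i,j}$, $(i,m)\to(j,m+r)$ at rate $b^{[r]}_{i,j}$, $(i,m)\to(i,m-1)$ at rate $m\delta$, let $\mathbb P_{i,j}(m;t)=\Pr(S(t)=j,M(t)=m\mid S(0)=i,M(0)=0)$, $[\mathcal B_m(t)]_{i,j}=\sum_{n\ge m}\binom nm\mathbb P_{i,j}(n;t)$, and $B_m:=\lim_{t\to\infty}\pi^\top\mathcal B_m(t)\mathbf 1$ where $\pi$ is the invariant distribution of $D$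 ($B_0=1$). $\lVert\cdot\rVert_\infty$ is the maximum absolute row sum norm. $\zeta^{(m)}:=\Gamma(\zeta+m)/\Gamma(\zeta)=\zeta(\zeta+1)\cdots(\zeta+m-1)$ (rising factorial, $\zeta^{(0)}=1$). *)

theory Defs
  imports "HOL-Probability.Probability"
begin

text \<open>Phase set is {1..N}. Rates: a i j (used only for i \<noteq> j), b r i j = b^{[r]}_{i,j}
  (used only for r \<ge> 1). States of the chain are pairs (phase, level) :: nat \<times> nat.\<close>

definition Dmat :: "nat \<Rightarrow> (nat \<Rightarrow> nat \<Rightarrow> real) \<Rightarrow> (nat \<Rightarrow> nat \<Rightarrow> nat \<Rightarrow> real) \<Rightarrow> nat \<Rightarrow> nat \<Rightarrow> real" where
  "Dmat N a b i j =
     (if i = j then - (\<Sum>k\<in>{1..N}-{i}. a i k) - (\<Sum>k\<in>{1..N}. \<Sum>r. b (Suc r) i k)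
      else a i j) + (\<Sum>r. b (Suc r) i j)"

definition irreducible_gen :: "nat \<Rightarrow> (nat \<Rightarrow> nat \<Rightarrow> real) \<Rightarrow> bool" where
  "irreducible_gen N Q \<longleftrightarrow>
     (\<forall>i\<in>{1..N}. \<forall>j\<in>{1..N}.
        (i, j) \<in> {(k, l). k \<in> {1..N} \<and> l \<in> {1..N} \<and> k \<noteq> l \<and> Q k l > 0}\<^sup>*)"

definition Cmat :: "(nat \<Rightarrow> nat \<Rightarrow> nat \<Rightarrow> real) \<Rightarrow> nat \<Rightarrow> nat \<Rightarrow> nat \<Rightarrow> real" where
  "Cmat b r i j = (\<Sum>k. real ((r + k) choose r) * b (r + k) i j)"

definition norm_inf :: "nat \<Rightarrow> (nat \<Rightarrow> nat \<Rightarrow> real) \<Rightarrow> real" where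
  "norm_inf N A = Max ((\<lambda>i. \<Sum>j\<in>{1..N}. \<bar>A i j\<bar>) ` {1..N})"

definition rate :: "nat \<Rightarrow> (nat \<Rightarrow> nat \<Rightarrow> real) \<Rightarrow> (nat \<Rightarrow> nat \<Rightarrow> nat \<Rightarrow> real) \<Rightarrow> real
                    \<Rightarrow> nat \<times> nat \<Rightarrow> nat \<times> nat \<Rightarrow> real" where
  "rate N a b \<delta> x y =
     (case x of (i, m) \<Rightarrow> case y of (j, n) \<Rightarrow>
       if j \<in> {1..N} then
         (if n = m \<and> j \<noteq> i then a i j else 0)
         + (if m < n then b (n - m) i j else 0)
         + (if j = i \<and> 1 \<le> m \<and> n = m - 1 then real m * \<delta> else 0)
       else 0)"

definition qout :: "nat \<Rightarrow> (nat \<Rightarrow> nat \<Rightarrow> real) \<Rightarrow> (nat \<Rightarrow> nat \<Rightarrow> nat \<Rightarrow> real) \<Rightarrow> real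
                    \<Rightarrow> nat \<times> nat \<Rightarrow> real" where
  "qout N a b \<delta> x =
     (case x of (i, m) \<Rightarrow>
        (\<Sum>k\<in>{1..N}-{i}. a i k) + (\<Sum>k\<in>{1..N}. \<Sum>r. b (Suc r) i k) + real m * \<delta>)"

text \<open>Feller's iteration for the minimal solution of the backward Kolmogorov integral equations:
  Pit n x y t = probability of being in y at time t after at most n jumps.\<close>
primrec Pit :: "nat \<Rightarrow> (nat \<Rightarrow> nat \<Rightarrow> real) \<Rightarrow> (nat \<Rightarrow> nat \<Rightarrow> nat \<Rightarrow> real) \<Rightarrow> real \<Rightarrow> nat
                 \<Rightarrow> nat \<times> nat \<Rightarrow> nat \<times> nat \<Rightarrow> real \<Rightarrow> ennreal" where
  "Pit 0 a b \<delta> N x y t = 0"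
| "Pit (Suc n) a b \<delta> N x y t =
     (if x = y then ennreal (exp (- qout N a b \<delta> x * t)) else 0)
     + (\<integral>\<^sup>+ s. indicator {0..t} s * ennreal (exp (- qout N a b \<delta> x * s))
           * (\<integral>\<^sup>+ z. ennreal (rate N a b \<delta> x z) * Pit n a b \<delta> N z y (t - s) \<partial>count_space UNIV)
         \<partial>lborel)"

definition Ptrans :: "(nat \<Rightarrow> nat \<Rightarrow> real) \<Rightarrow> (nat \<Rightarrow> nat \<Rightarrow> nat \<Rightarrow> real) \<Rightarrow> real \<Rightarrow> nat
                      \<Rightarrow> nat \<times> nat \<Rightarrow> nat \<times> nat \<Rightarrow> real \<Rightarrow> ennreal" where
  "Ptrans a b \<delta> N x y t = (SUP n. Pit n a b \<delta> N x y t)"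

definition Bcal :: "(nat \<Rightarrow> nat \<Rightarrow> real) \<Rightarrow> (nat \<Rightarrow> nat \<Rightarrow> nat \<Rightarrow> real) \<Rightarrow> real \<Rightarrow> nat
                      \<Rightarrow> nat \<Rightarrow> nat \<Rightarrow> nat \<Rightarrow> real \<Rightarrow> ennreal" where
  "Bcal a b \<delta> N m i j t = (\<Sum>n. of_nat (n choose m) * Ptrans a b \<delta> N (i, 0) (j, n) t)"

definition piB :: "(nat \<Rightarrow> real) \<Rightarrow> (nat \<Rightarrow> nat \<Rightarrow> real) \<Rightarrow> (nat \<Rightarrow> nat \<Rightarrow> nat \<Rightarrow> real) \<Rightarrow> real
                   \<Rightarrow> nat \<Rightarrow> nat \<Rightarrow> real \<Rightarrow> ennreal" where
  "piB \<pi> a b \<delta> N m t = (\<Sum>i\<in>{1..N}. \<Sum>j\<in>{1..N}. ennreal (\<pi> i) * Bcal a b \<delta> N m i j t)"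

end

theory Submission
  imports Defs
begin

text \<open>
  Write \<open>fmom m (i, k) t\<close> for the expected value of \<open>M(t) choose m\<close> started from \<open>(i, k)\<close>.
  The generator maps polynomials in the level, written in the basis \<open>k choose l\<close>, to polynomials
  of no higher degree, so the ansatz
  \<open>fmom m (i, k) t = exp (- (\<theta> + m \<delta>) t) * (\<Sum>l\<le>m. (k choose l) * g\<^sub>m\<^sub>-\<^sub>l (i, t))\<close>
  solves the backward equation once the \<open>g\<^sub>p\<close> solve a triangular linear system; its power series
  solution has nonnegative coefficients after shifting \<open>D\<close> by \<open>\<theta>\<close>. As a solution of the
  backward equation, \<open>fmom\<close> is a fixed point of Feller's integral operator and so dominates the
  moments of the minimal chain; the Lyapunov function \<open>exp (\<eta> t) \<beta>\<^sup>k\<close>, \<open>1 < \<beta> < 1/lam\<close>,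
  forces equality.

  Started at level \<open>0\<close> under the invariant \<open>\<pi>\<close>, the phase dynamics cancel in the derivative,
  so \<open>\<pi>\<^sup>T B\<^sub>m(t) 1\<close> is nondecreasing and converges. Replacing \<open>D\<close> by its row sums and \<open>D\<^sub>1\<close>
  by \<open>\<parallel>D\<^sub>1\<parallel>\<^sub>\<infinity>\<close> gives a scalar majorant \<open>h\<^sub>m\<close> of the moments, which satisfies
  \<open>m \<delta> h\<^sub>m(t) = (\<Sum>l=1..m. (1 - exp (- l \<delta> t)) w\<^sub>l h\<^sub>m\<^sub>-\<^sub>l(t))\<close>; dropping the exponentials
  gives the recursion solved by the claimed bound. The formula for \<open>C\<^sub>r\<close> is a negative binomial
  series.
\<close>

lemma negative_binomial_sums:
  fixes x :: real
  assumes "\<bar>x\<bar> < 1"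
  shows "(\<lambda>k. real ((p + k) choose p) * x ^ k) sums (1 / (1 - x) ^ (p + 1))"
proof -
  have "\<bar>- x\<bar> < 1" using assms by simp
  from gen_binomial_real[OF this, of "- real (p + 1)"]
  have s: "(\<lambda>n. (- real (p + 1) gchoose n) * (- x) ^ n) sums (1 + - x) powr (- real (p + 1))" .
  have e: "(- real (p + 1) gchoose n) * (- x) ^ n = real ((p + n) choose p) * x ^ n" for n
  proof -
    have "(- real (p + 1) gchoose n) = (- 1) ^ n * (real (p + 1) + of_nat n - 1 gchoose n)"
      by (rule gbinomial_minus)
    also have "real (p + 1) + of_nat n - 1 = real (p + n)" by simp
    also have "(real (p + n) gchoose n) = real ((p + n) choose n)"
      by (simp add: binomial_gbinomial)
    also have "(p + n) choose n = (p + n) choose p"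
      using binomial_symmetric[of n "p + n"] by simp
    finally show ?thesis by (simp add: power_minus')
  qed
  have "(1 + - x) powr (- real (p + 1)) = inverse ((1 - x) powr real (p + 1))"
    by (subst powr_minus[symmetric]) simp
  also have "(1 - x) powr real (p + 1) = (1 - x) ^ (p + 1)"
    using assms by (intro powr_realpow) simp
  finally show ?thesis using s unfolding e by (simp add: divide_inverse)
qed

lemma sum_triangle_reindex:
  fixes f :: "nat \<Rightarrow> nat \<Rightarrow> 'a::comm_monoid_add"
  shows "(\<Sum>l\<le>m. \<Sum>p\<le>l. f (l - p) p) = (\<Sum>l\<le>m. \<Sum>p\<le>m - l. f l p)"
proof -
  have "(\<Sum>l\<le>m. \<Sum>p\<le>l. f (l - p) p) = (\<Sum>(p, l)\<in>{(p, l). p + l \<le> m}. f l p)"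
    by (rule sum.triangle_reindex_eq[symmetric])
  also have "\<dots> = (\<Sum>(l, p)\<in>{(l, p). l + p \<le> m}. f l p)"
    by (rule sum.reindex_bij_witness[of _ prod.swap prod.swap]) auto
  also have "{(l, p). l + p \<le> m} = Sigma {..m} (\<lambda>l. {..m - l})"
    by auto
  finally show ?thesis
    by (simp add: sum.Sigma)
qed

lemma sum_triangle_swap:
  fixes f :: "nat \<Rightarrow> nat \<Rightarrow> 'a::comm_monoid_add"
  shows "(\<Sum>l\<in>{1..m}. \<Sum>l'\<in>{1..m - l}. f l l') = (\<Sum>l'\<in>{1..m}. \<Sum>l\<in>{1..m - l'}. f l l')"
proof -
  have "(\<Sum>l\<in>{1..m}. \<Sum>l'\<in>{1..m - l}. f l l') = (\<Sum>l\<in>{1..m}. \<Sum>l' | l' \<in> {1..m} \<and> l + l' \<le> m. f l l')"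
    by (intro sum.cong refl) auto
  also have "\<dots> = (\<Sum>l'\<in>{1..m}. \<Sum>l | l \<in> {1..m} \<and> l + l' \<le> m. f l l')"
    by (rule sum.swap_restrict) auto
  also have "\<dots> = (\<Sum>l'\<in>{1..m}. \<Sum>l\<in>{1..m - l'}. f l l')"
    by (intro sum.cong refl) auto
  finally show ?thesis .
qed

lemma binomial_pred_diff:
  "real k * real ((k - 1) choose l) - real k * real (k choose l) = - real l * real (k choose l)"
proof (cases "l \<le> k")
  case True
  have "real k * real ((k - 1) choose l) = (real k - real l) * real (k choose l)"
    using binomial_absorb_comp[of k l] True by (metis of_nat_diff of_nat_mult)
  then show ?thesis by (simp add: algebra_simps)
qed (simp add: binomial_eq_0)

lemma binomial_le_power_div:
  fixes \<beta> :: real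
  assumes "\<beta> > 1"
  shows "real (k choose l) \<le> \<beta> ^ k / (\<beta> - 1) ^ l"
proof (cases "l \<le> k")
  case True
  have "real (k choose l) * (\<beta> - 1) ^ l * 1 ^ (k - l) \<le> (\<Sum>j\<le>k. real (k choose j) * (\<beta> - 1) ^ j * 1 ^ (k - j))"
    using True assms by (intro member_le_sum) auto
  also have "\<dots> = \<beta> ^ k"
    using binomial_ring[of "\<beta> - 1" 1 k] by simp
  finally show ?thesis using assms by (simp add: field_simps)
qed (use assms in \<open>simp add: binomial_eq_0\<close>)

lemma sum_zero_choose: "(\<Sum>l\<le>m. of_nat (0 choose l) * f l) = (f 0 :: 'a::semiring_1)"
  by (induction m) auto

lemma sum_pochhammer_div_fact:
  "(\<Sum>j\<le>n. pochhammer (x::real) j / fact j) = pochhammer (x + 1) n / fact n"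
proof (induction n)
  case (Suc n)
  have "pochhammer (x + 1) n / fact n + pochhammer x (Suc n) / fact (Suc n)
      = pochhammer (x + 1) n * (real (Suc n) + x) / fact (Suc n)"
    by (simp add: pochhammer_rec field_simps del: of_nat_Suc)
  also have "\<dots> = pochhammer (x + 1) (Suc n) / fact (Suc n)"
    by (simp add: pochhammer_Suc algebra_simps)
  finally show ?case using Suc by simp
qed simp

lemma pochhammer_div_fact_recurrence:
  "real m * (pochhammer (x::real) m / fact m) = x * (\<Sum>j<m. pochhammer x j / fact j)"
proof (cases m)
  case (Suc n)
  have "real (Suc n) * (pochhammer x (Suc n) / fact (Suc n)) = x * (pochhammer (x + 1) n / fact n)"
    by (simp add: pochhammer_rec field_simps del: of_nat_Suc)
  then show ?thesis
    using Suc by (simp add: sum_pochhammer_div_fact lessThan_Suc_atMost)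
qed simp

lemma nn_integral_count_space_singleton:
  "(\<integral>\<^sup>+ y. (if x = y then c else 0) * g y \<partial>count_space UNIV) = c * (g x :: ennreal)"
proof -
  have "(\<integral>\<^sup>+ y. (if x = y then c else 0) * g y \<partial>count_space UNIV)
      = (\<integral>\<^sup>+ y. (c * g x) * indicator {x} y \<partial>count_space UNIV)"
    by (intro nn_integral_cong) (auto simp: indicator_def)
  also have "\<dots> = c * g x" by (simp add: nn_integral_cmult_indicator)
  finally show ?thesis .
qed

lemma borel_measurable_nn_integral_count_space_pair:
  fixes F :: "nat \<times> nat \<Rightarrow> 'a \<Rightarrow> ennreal"
  assumes "\<And>z. (\<lambda>s. F z s) \<in> borel_measurable M"
  shows "(\<lambda>s. \<integral>\<^sup>+ z. F z s \<partial>count_space UNIV) \<in> borel_measurable M"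
proof -
  have "bij_betw prod_decode UNIV UNIV" using bij_prod_decode by (simp add: bij_def)
  then have e: "(\<integral>\<^sup>+ z. F z s \<partial>count_space UNIV) = (\<Sum>i. F (prod_decode i) s)" for s
    using nn_integral_bij_count_space[of prod_decode UNIV UNIV "\<lambda>z. F z s"]
    by (simp add: nn_integral_count_space_nat)
  show ?thesis unfolding e by (intro borel_measurable_suminf_order assms)
qed

lemma nn_integral_exp_neg_Icc_le:
  assumes r: "r > 0" and t: "t \<ge> 0"
  shows "(\<integral>\<^sup>+ s\<in>{0..t}. ennreal (exp (- r * s)) \<partial>lborel) \<le> ennreal (1 / r)"
proof -
  define F where "F s = - exp (- r * s) / r" for s
  have "(\<integral>\<^sup>+ s\<in>{0..t}. ennreal (exp (- r * s)) \<partial>lborel) = ennreal (F t - F 0)"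
  proof (rule nn_integral_FTC_Icc)
    show "(\<lambda>s. exp (- r * s)) \<in> borel_measurable borel" by measurable
    fix s show "(F has_real_derivative exp (- r * s)) (at s)"
      unfolding F_def using r by (auto intro!: derivative_eq_intros simp: field_simps)
  qed (use t in auto)
  also have "F t - F 0 \<le> 1 / r" using r by (simp add: F_def field_simps)
  finally show ?thesis by (simp add: ennreal_leI)
qed

definition egf :: "(nat \<Rightarrow> real) \<Rightarrow> real \<Rightarrow> real" where
  "egf f t = (\<Sum>n. f n / fact n * t ^ n)"

definition exp_type :: "(nat \<Rightarrow> real) \<Rightarrow> bool" where
  "exp_type f \<longleftrightarrow> (\<exists>C R. R \<ge> 0 \<and> (\<forall>n. \<bar>f n\<bar> \<le> C * R ^ n))"

lemma exp_type_cmult: "exp_type f \<Longrightarrow> exp_type (\<lambda>n. c * f n)"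
proof -
  assume "exp_type f"
  then obtain C R where R: "R \<ge> 0" "\<And>n. \<bar>f n\<bar> \<le> C * R ^ n" by (auto simp: exp_type_def)
  have "\<bar>c * f n\<bar> \<le> (\<bar>c\<bar> * C) * R ^ n" for n
    using R(2)[of n] by (simp add: abs_mult mult.assoc mult_left_mono)
  then show ?thesis using R(1) unfolding exp_type_def by blast
qed

lemma exp_type_add: "exp_type f \<Longrightarrow> exp_type g \<Longrightarrow> exp_type (\<lambda>n. f n + g n)"
proof -
  assume "exp_type f" "exp_type g"
  then obtain C R D S where R: "R \<ge> 0" "\<And>n. \<bar>f n\<bar> \<le> C * R ^ n" and S: "S \<ge> 0" "\<And>n. \<bar>g n\<bar> \<le> D * S ^ n"
    by (auto simp: exp_type_def)
  have "\<bar>f n + g n\<bar> \<le> (\<bar>C\<bar> + \<bar>D\<bar>) * (max R S) ^ n" for n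
  proof -
    have "C * R ^ n \<le> \<bar>C\<bar> * max R S ^ n" using R(1)
      by (intro order_trans[OF abs_ge_self[of "C * R ^ n"]])
        (auto simp: abs_mult intro!: mult_left_mono power_mono)
    moreover have "D * S ^ n \<le> \<bar>D\<bar> * max R S ^ n" using S(1)
      by (intro order_trans[OF abs_ge_self[of "D * S ^ n"]])
        (auto simp: abs_mult intro!: mult_left_mono power_mono)
    ultimately show ?thesis using R(2)[of n] S(2)[of n] by (simp add: algebra_simps) linarith
  qed
  then show ?thesis unfolding exp_type_def using R(1) S(1) by (meson max.coboundedI1)
qed

lemma exp_type_sum: "finite A \<Longrightarrow> (\<And>i. i \<in> A \<Longrightarrow> exp_type (f i)) \<Longrightarrow> exp_type (\<lambda>n. \<Sum>i\<in>A. f i n)"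
proof (induction A rule: finite_induct)
  case empty
  then show ?case unfolding exp_type_def by (intro exI[of _ 0] exI[of _ 0]) simp
next
  case (insert x F)
  then show ?case by (simp add: exp_type_add)
qed

lemma summable_egf:
  assumes "exp_type f" shows "summable (\<lambda>n. f n / fact n * t ^ n)"
proof -
  obtain C R where R0: "R \<ge> 0" and b: "\<And>n. \<bar>f n\<bar> \<le> C * R ^ n" using assms by (auto simp: exp_type_def)
  have R: "\<bar>f n\<bar> \<le> C * \<bar>R\<bar> ^ n" for n
    using b[of n] R0 by simp
  have s: "summable (\<lambda>n. C * (inverse (fact n) * (\<bar>R\<bar> * \<bar>t\<bar>) ^ n))"
    by (intro summable_mult summable_exp)
  show ?thesis
  proof (rule summable_comparison_test'[OF s])
    fix n
    have "norm (f n / fact n * t ^ n) = \<bar>f n\<bar> * \<bar>t\<bar> ^ n / fact n"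
      by (simp add: abs_mult power_abs)
    also have "\<dots> \<le> C * \<bar>R\<bar> ^ n * \<bar>t\<bar> ^ n / fact n"
      by (intro divide_right_mono mult_right_mono R) auto
    also have "\<dots> = C * (inverse (fact n) * (\<bar>R\<bar> * \<bar>t\<bar>) ^ n)"
      by (simp add: power_mult_distrib field_simps)
    finally show "norm (f n / fact n * t ^ n) \<le> C * (inverse (fact n) * (\<bar>R\<bar> * \<bar>t\<bar>) ^ n)" .
  qed
qed

lemma DERIV_egf:
  assumes "exp_type f"
  shows "((\<lambda>t. egf f t) has_real_derivative egf (\<lambda>n. f (Suc n)) t) (at t)"
proof -
  have s: "summable (\<lambda>n. (f n / fact n) * y ^ n)" for y using summable_egf[OF assms] by simp
  have d: "diffs (\<lambda>n. f n / fact n) n = f (Suc n) / fact n" for n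
  proof -
    have "fact (Suc n) = real (Suc n) * (fact n :: real)" by (simp only: fact_Suc of_nat_mult)
    moreover have "real (Suc n) > 0" "(fact n :: real) > 0" by auto
    ultimately show ?thesis by (simp add: diffs_def)
  qed
  show ?thesis
    using termdiffs_strong_converges_everywhere[of "\<lambda>n. f n / fact n" t, OF s]
    unfolding egf_def d by simp
qed

lemma continuous_on_egf: "exp_type f \<Longrightarrow> continuous_on S (egf f)"
  using DERIV_egf by (meson DERIV_continuous continuous_at_imp_continuous_on)

lemma egf_0: "egf f 0 = f 0"
proof -
  have "(\<lambda>n. f n / fact n * 0 ^ n) sums (f 0)"
    using sums_single[of 0 "\<lambda>_. f 0"] by (rule sums_cong[THEN iffD1, rotated]) auto
  then show ?thesis by (simp add: egf_def sums_iff)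
qed

lemma egf_add: "exp_type f \<Longrightarrow> exp_type g \<Longrightarrow> egf (\<lambda>n. f n + g n) t = egf f t + egf g t"
  unfolding egf_def using summable_egf[of f t] summable_egf[of g t]
  by (subst suminf_add) (auto simp: add_divide_distrib distrib_right)

lemma egf_cmult: "exp_type f \<Longrightarrow> egf (\<lambda>n. c * f n) t = c * egf f t"
  unfolding egf_def using summable_egf[of f t]
  by (subst suminf_mult[symmetric]) (auto simp: algebra_simps)

lemma egf_sum: "finite A \<Longrightarrow> (\<And>i. i \<in> A \<Longrightarrow> exp_type (f i)) \<Longrightarrow>
   egf (\<lambda>n. \<Sum>i\<in>A. f i n) t = (\<Sum>i\<in>A. egf (f i) t)"
proof -
  assume A: "finite A" "\<And>i. i \<in> A \<Longrightarrow> exp_type (f i)"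
  have "(\<lambda>n. (\<Sum>i\<in>A. f i n) / fact n * t ^ n) = (\<lambda>n. \<Sum>i\<in>A. f i n / fact n * t ^ n)"
    by (simp add: sum_divide_distrib sum_distrib_right)
  moreover have "(\<Sum>n. \<Sum>i\<in>A. f i n / fact n * t ^ n) = (\<Sum>i\<in>A. \<Sum>n. f i n / fact n * t ^ n)"
    using A summable_egf by (intro suminf_sum) auto
  ultimately show ?thesis unfolding egf_def by simp
qed

lemma egf_sum_cmult: "finite A \<Longrightarrow> (\<And>i. i \<in> A \<Longrightarrow> exp_type (f i)) \<Longrightarrow>
   egf (\<lambda>n. \<Sum>i\<in>A. c i * f i n) t = (\<Sum>i\<in>A. c i * egf (f i) t)"
  by (subst egf_sum) (auto intro: exp_type_cmult simp: egf_cmult)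

lemma egf_mono: "exp_type f \<Longrightarrow> exp_type g \<Longrightarrow> (\<And>n. f n \<le> g n) \<Longrightarrow> t \<ge> 0 \<Longrightarrow> egf f t \<le> egf g t"
  unfolding egf_def using summable_egf
  by (intro suminf_le) (auto intro!: mult_right_mono divide_right_mono)

lemma egf_nonneg: "exp_type f \<Longrightarrow> (\<And>n. 0 \<le> f n) \<Longrightarrow> t \<ge> 0 \<Longrightarrow> egf f t \<ge> 0"
  unfolding egf_def using summable_egf
  by (intro suminf_nonneg) auto

lemma egf_mono_arg:
  assumes "exp_type f" "\<And>n. 0 \<le> f n" "0 \<le> s" "s \<le> t"
  shows "egf f s \<le> egf f t"
  unfolding egf_def using assms summable_egf[OF assms(1)]
proof (intro suminf_le)
  fix n
  show "f n / fact n * s ^ n \<le> f n / fact n * t ^ n"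
    using assms by (intro mult_left_mono power_mono divide_nonneg_pos) auto
qed auto

locale burst_chain =
  fixes N :: nat and \<delta> lam :: real and a :: "nat \<Rightarrow> nat \<Rightarrow> real"
    and b :: "nat \<Rightarrow> nat \<Rightarrow> nat \<Rightarrow> real"
  assumes N: "N \<ge> 1" and delta: "\<delta> > 0"
    and a_nonneg: "\<And>i j. i \<in> {1..N} \<Longrightarrow> j \<in> {1..N} \<Longrightarrow> i \<noteq> j \<Longrightarrow> a i j \<ge> 0"
    and b_nonneg: "\<And>r i j. r \<ge> 1 \<Longrightarrow> i \<in> {1..N} \<Longrightarrow> j \<in> {1..N} \<Longrightarrow> b r i j \<ge> 0"
    and lam0: "0 < lam" and lam1: "lam < 1"
    and geom: "\<And>r i j. r \<ge> 1 \<Longrightarrow> i \<in> {1..N} \<Longrightarrow> j \<in> {1..N} \<Longrightarrow> b r i j = lam ^ (r - 1) * b 1 i j"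
begin

abbreviation phases :: "nat set" where "phases \<equiv> {1..N}"

definition D1 :: "nat \<Rightarrow> nat \<Rightarrow> real" where
  "D1 i j = b 1 i j"

lemma D1_nonneg: "i \<in> phases \<Longrightarrow> j \<in> phases \<Longrightarrow> D1 i j \<ge> 0"
  using b_nonneg[of 1 i j] by (simp add: D1_def)

lemma Cmat_geometric:
  assumes r: "r \<ge> 1" and ij: "i \<in> phases" "j \<in> phases"
  shows "Cmat b r i j = lam ^ (r - 1) / (1 - lam) ^ (r + 1) * b 1 i j"
proof -
  have "real ((r + k) choose r) * b (r + k) i j
      = lam ^ (r - 1) * b 1 i j * (real ((r + k) choose r) * lam ^ k)" for k
  proof -
    have "b (r + k) i j = lam ^ ((r - 1) + k) * b 1 i j"
      using geom[of "r + k" i j] r ij by simp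
    then show ?thesis by (simp add: power_add mult_ac)
  qed
  moreover have "(\<lambda>k. lam ^ (r - 1) * b 1 i j * (real ((r + k) choose r) * lam ^ k))
      sums (lam ^ (r - 1) * b 1 i j * (1 / (1 - lam) ^ (r + 1)))"
    by (intro sums_mult negative_binomial_sums) (use lam0 lam1 in auto)
  ultimately have "(\<lambda>k. real ((r + k) choose r) * b (r + k) i j)
      sums (lam ^ (r - 1) * b 1 i j * (1 / (1 - lam) ^ (r + 1)))"
    by (simp only:)
  then show ?thesis
    unfolding Cmat_def by (simp add: sums_iff)
qed

text \<open>Bursts of size \<open>r + 1\<close> have rate matrix \<open>lam ^ r * D1\<close>, so by \<open>cfac_sums\<close> we have
  \<open>C\<^sub>p = cfac p * D1\<close> for \<open>p \<ge> 1\<close>, and \<open>cfac 0 * D1\<close> is the total burst rate matrix.\<close>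
definition cfac :: "nat \<Rightarrow> real" where
  "cfac p = (if p = 0 then 1 / (1 - lam) else lam ^ (p - 1) / (1 - lam) ^ (p + 1))"

lemma cfac_sums: "(\<lambda>r. lam ^ r * real (Suc r choose p)) sums cfac p"
proof (cases p)
  case 0
  then show ?thesis using geometric_sums[of lam] lam0 lam1 by (simp add: cfac_def)
next
  case (Suc q)
  have "(\<lambda>k. lam ^ q * (real ((p + k) choose p) * lam ^ k)) sums (lam ^ q * (1 / (1 - lam) ^ (p + 1)))"
    by (intro sums_mult negative_binomial_sums) (use lam0 lam1 in auto)
  then have "(\<lambda>k. (\<lambda>r. lam ^ r * real (Suc r choose p)) (k + q)) sums cfac p"
    using Suc by (simp add: cfac_def power_add algebra_simps)
  then show ?thesis
    by (subst (asm) sums_zero_iff_shift) (auto simp: Suc binomial_eq_0)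
qed

lemma cfac_pos: "cfac p > 0"
  using lam0 lam1 by (simp add: cfac_def)

lemma cfac_nonneg: "cfac p \<ge> 0"
  using cfac_pos[of p] by simp

definition arow :: "nat \<Rightarrow> real" where
  "arow i = (\<Sum>j\<in>phases - {i}. a i j)"

definition brow :: "nat \<Rightarrow> real" where
  "brow i = (\<Sum>j\<in>phases. D1 i j)"

lemma arow_nonneg: "i \<in> phases \<Longrightarrow> arow i \<ge> 0"
  unfolding arow_def by (intro sum_nonneg) (auto intro: a_nonneg)

lemma brow_nonneg: "i \<in> phases \<Longrightarrow> brow i \<ge> 0"
  unfolding brow_def by (intro sum_nonneg) (auto intro: D1_nonneg)

lemma suminf_b_Suc: "i \<in> phases \<Longrightarrow> j \<in> phases \<Longrightarrow> (\<Sum>r. b (Suc r) i j) = D1 i j / (1 - lam)"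
proof -
  assume ij: "i \<in> phases" "j \<in> phases"
  have "(\<lambda>r. lam ^ r * D1 i j) sums (1 / (1 - lam) * D1 i j)"
    using geometric_sums[of lam] lam0 lam1 by (intro sums_mult2) auto
  moreover have "b (Suc r) i j = lam ^ r * D1 i j" for r
    using geom[of "Suc r" i j] ij by (simp add: D1_def)
  ultimately show ?thesis by (simp add: sums_iff)
qed

definition qrate :: "nat \<Rightarrow> nat \<Rightarrow> real" where
  "qrate i k = arow i + brow i / (1 - lam) + real k * \<delta>"

lemma qout_eq_qrate: "i \<in> phases \<Longrightarrow> qout N a b \<delta> (i, k) = qrate i k"
  by (simp add: qout_def qrate_def arow_def brow_def suminf_b_Suc sum_divide_distrib)

lemma Dmat_eq: "i \<in> phases \<Longrightarrow> j \<in> phases \<Longrightarrow> Dmat N a b i j =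
   (if i = j then - arow i - brow i / (1 - lam) else a i j) + D1 i j / (1 - lam)"
  by (simp add: Dmat_def arow_def brow_def suminf_b_Suc sum_divide_distrib)

lemma Dmat_row_sum: "i \<in> phases \<Longrightarrow> (\<Sum>j\<in>phases. Dmat N a b i j) = 0"
proof -
  assume i: "i \<in> phases"
  have "(\<Sum>j\<in>phases. (if i = j then - arow i - brow i / (1 - lam) else a i j))
     = (- arow i - brow i / (1 - lam)) + arow i"
    using i unfolding arow_def by (subst sum.remove[of _ i]) (auto intro!: sum.cong)
  moreover have "(\<Sum>j\<in>phases. D1 i j / (1 - lam)) = brow i / (1 - lam)"
    by (simp add: brow_def sum_divide_distrib)
  ultimately show ?thesis
    using i by (simp add: Dmat_eq sum.distrib)
qed

definition normD1 :: real where
  "normD1 = norm_inf N (b 1)"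

lemma brow_le_normD1: "i \<in> phases \<Longrightarrow> brow i \<le> normD1"
proof -
  assume i: "i \<in> phases"
  have "brow i = (\<Sum>j\<in>phases. \<bar>b 1 i j\<bar>)"
    unfolding brow_def using D1_nonneg i by (intro sum.cong) (auto simp: D1_def)
  also have "\<dots> \<le> normD1"
    unfolding normD1_def norm_inf_def using i by (intro Max_ge) auto
  finally show ?thesis .
qed

lemma normD1_nonneg: "normD1 \<ge> 0"
  using brow_le_normD1[of 1] brow_nonneg[of 1] N by simp

lemma rate_outside_phases: "fst z \<notin> phases \<Longrightarrow> rate N a b \<delta> x z = 0"
  unfolding rate_def by (simp only: split_beta if_False)

lemma rate_nonneg: "i \<in> phases \<Longrightarrow> rate N a b \<delta> (i, k) (j, n) \<ge> 0"
  using a_nonneg[of i j] b_nonneg[of "n - k" i j] delta by (cases "j \<in> phases") (auto simp: rate_def)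

lemma rate_row_sums:
  fixes V :: "nat \<times> nat \<Rightarrow> real"
  assumes i: "i \<in> phases" and j: "j \<in> phases"
    and sV: "summable (\<lambda>r. lam ^ r * V (j, k + r + 1))"
  shows "(\<lambda>n. rate N a b \<delta> (i, k) (j, n) * V (j, n)) sums
     ((if j = i then 0 else a i j * V (j, k)) + D1 i j * (\<Sum>r. lam ^ r * V (j, k + r + 1))
      + (if j = i then real k * \<delta> * V (i, k - 1) else 0))"
proof -
  define u where "u = (if j = i then 0 else a i j * V (j, k))"
  define w where "w = (if j = i then real k * \<delta> * V (i, k - 1) else 0)"
  have "rate N a b \<delta> (i, k) (j, n) * V (j, n) = (if n = k then u else 0)
       + (if k < n then lam ^ (n - k - 1) * D1 i j * V (j, n) else 0)
       + (if n = k - 1 \<and> 1 \<le> k then w else 0)" for n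
    using geom[of "n - k" i j] i j by (auto simp: u_def w_def rate_def D1_def algebra_simps)
  moreover have "(\<lambda>n. if n = k then u else 0) sums u"
    using sums_single[of k "\<lambda>_. u"] by simp
  moreover have "(\<lambda>n. if n = k - 1 \<and> 1 \<le> k then w else 0) sums w"
    using sums_single[of "k - 1" "\<lambda>_. w"] by (cases k) (auto simp: w_def)
  moreover have "(\<lambda>n. if k < n then lam ^ (n - k - 1) * D1 i j * V (j, n) else 0)
      sums (D1 i j * (\<Sum>r. lam ^ r * V (j, k + r + 1)))"
  proof -
    have "(\<lambda>r. D1 i j * (lam ^ r * V (j, k + r + 1))) sums (D1 i j * (\<Sum>r. lam ^ r * V (j, k + r + 1)))"
      by (intro sums_mult summable_sums sV)
    then have "(\<lambda>r. (\<lambda>n. if k < n then lam ^ (n - k - 1) * D1 i j * V (j, n) else 0) (r + (k + 1)))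
        sums (D1 i j * (\<Sum>r. lam ^ r * V (j, k + r + 1)))"
      by (simp add: algebra_simps)
    then show ?thesis by (subst (asm) sums_zero_iff_shift) auto
  qed
  ultimately show ?thesis
    unfolding u_def[symmetric] w_def[symmetric] by (simp only: sums_add)
qed

definition jump_sum :: "(nat \<times> nat \<Rightarrow> real) \<Rightarrow> nat \<Rightarrow> nat \<Rightarrow> real" where
  "jump_sum V i k = (\<Sum>j\<in>phases - {i}. a i j * V (j, k))
     + (\<Sum>j\<in>phases. D1 i j * (\<Sum>r. lam ^ r * V (j, k + r + 1))) + real k * \<delta> * V (i, k - 1)"

lemma jump_sum_nonneg:
  assumes "i \<in> phases" "\<And>z. 0 \<le> V z" "\<And>j. j \<in> phases \<Longrightarrow> summable (\<lambda>r. lam ^ r * V (j, k + r + 1))"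
  shows "0 \<le> jump_sum V i k"
  unfolding jump_sum_def using assms delta lam0
  by (intro add_nonneg_nonneg sum_nonneg mult_nonneg_nonneg suminf_nonneg a_nonneg D1_nonneg) auto

lemma jump_sum_scale:
  assumes i: "i \<in> phases" and V: "\<And>j n. j \<in> phases \<Longrightarrow> V (j, n) = c * W (j, n)"
    and sW: "\<And>j. j \<in> phases \<Longrightarrow> summable (\<lambda>r. lam ^ r * W (j, k + r + 1))"
  shows "jump_sum V i k = c * jump_sum W i k"
proof -
  have burst: "(\<Sum>r. lam ^ r * V (j, k + r + 1)) = c * (\<Sum>r. lam ^ r * W (j, k + r + 1))" if "j \<in> phases" for j
    using suminf_mult[OF sW[OF that], of c] V[OF that] by (simp add: mult_ac)
  have "(\<Sum>j\<in>phases - {i}. a i j * V (j, k)) = c * (\<Sum>j\<in>phases - {i}. a i j * W (j, k))"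
    unfolding sum_distrib_left by (intro sum.cong refl) (simp add: V)
  moreover have "(\<Sum>j\<in>phases. D1 i j * (\<Sum>r. lam ^ r * V (j, k + r + 1)))
      = c * (\<Sum>j\<in>phases. D1 i j * (\<Sum>r. lam ^ r * W (j, k + r + 1)))"
    unfolding sum_distrib_left using burst by (intro sum.cong refl) auto
  ultimately show ?thesis
    by (simp add: jump_sum_def V[OF i] algebra_simps)
qed

lemma nn_integral_rate_eq:
  fixes V :: "nat \<times> nat \<Rightarrow> real"
  assumes i: "i \<in> phases" and V0: "\<And>z. 0 \<le> V z"
    and sV: "\<And>j. j \<in> phases \<Longrightarrow> summable (\<lambda>r. lam ^ r * V (j, k + r + 1))"
  shows "(\<integral>\<^sup>+ z. ennreal (rate N a b \<delta> (i, k) z) * ennreal (V z) \<partial>count_space UNIV)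
    = ennreal (jump_sum V i k)"
proof -
  define f where "f j n = rate N a b \<delta> (i, k) (j, n) * V (j, n)" for j n
  define R where "R j = (if j = i then 0 else a i j * V (j, k)) + D1 i j * (\<Sum>r. lam ^ r * V (j, k + r + 1))
      + (if j = i then real k * \<delta> * V (i, k - 1) else 0)" for j
  have f0: "0 \<le> f j n" for j n
    unfolding f_def using rate_nonneg[OF i, of k j n] V0[of "(j, n)"] by simp
  have fs: "f j sums R j" if "j \<in> phases" for j
    unfolding f_def R_def using rate_row_sums[OF i that sV[OF that]] .
  have R0: "0 \<le> R j" if "j \<in> phases" for j
    using f0 fs[OF that] suminf_nonneg[of "f j"] by (simp add: sums_iff)
  have row: "(\<integral>\<^sup>+ n. ennreal (f j n) \<partial>count_space UNIV) = ennreal (R j) * indicator phases j" for j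
  proof (cases "j \<in> phases")
    case True
    have "(\<integral>\<^sup>+ n. ennreal (f j n) \<partial>count_space UNIV) = (\<Sum>n. ennreal (f j n))"
      by (rule nn_integral_count_space_nat)
    also have "\<dots> = ennreal (R j)"
      using fs[OF True] f0 by (subst suminf_ennreal2) (auto simp: sums_iff)
    finally show ?thesis using True by simp
  qed (simp add: f_def rate_outside_phases)
  have "(\<integral>\<^sup>+ z. ennreal (rate N a b \<delta> (i, k) z) * ennreal (V z) \<partial>count_space UNIV)
      = (\<integral>\<^sup>+ z. ennreal (f (fst z) (snd z)) \<partial>count_space UNIV)"
    by (intro nn_integral_cong) (auto simp: f_def ennreal_mult'' V0)
  also have "\<dots> = (\<integral>\<^sup>+ j. \<integral>\<^sup>+ n. ennreal (f j n) \<partial>count_space UNIV \<partial>count_space UNIV)"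
    using nn_integral_fst_count_space[of "\<lambda>z. ennreal (f (fst z) (snd z))"] by simp
  also have "\<dots> = (\<Sum>j\<in>phases. ennreal (R j))"
    unfolding row
    by (subst nn_integral_count_space_indicator[symmetric]) (auto simp: nn_integral_count_space_finite)
  also have "\<dots> = ennreal (\<Sum>j\<in>phases. R j)"
    using R0 by (intro sum_ennreal) auto
  also have "(\<Sum>j\<in>phases. R j) = jump_sum V i k"
  proof -
    have "(\<Sum>j\<in>phases. if j = i then 0 else a i j * V (j, k)) = (\<Sum>j\<in>phases - {i}. a i j * V (j, k))"
      by (rule sum.mono_neutral_cong_right) auto
    then show ?thesis
      using i by (simp add: R_def jump_sum_def sum.distrib)
  qed
  finally show ?thesis .
qed

section \<open>Factorial moments in closed form\<close>

definition choose_comb :: "nat \<Rightarrow> (nat \<Rightarrow> nat \<Rightarrow> real) \<Rightarrow> nat \<times> nat \<Rightarrow> real" where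
  "choose_comb m G = (\<lambda>(j, n). \<Sum>l\<le>m. real (n choose l) * G l j)"

lemma choose_comb_bursts_sums: "(\<lambda>r. lam ^ r * choose_comb m G (j, k + r + 1)) sums
   (\<Sum>l\<le>m. (\<Sum>p\<le>l. real (k choose (l - p)) * cfac p) * G l j)"
proof -
  have e: "lam ^ r * choose_comb m G (j, k + r + 1) =
     (\<Sum>l\<le>m. \<Sum>p\<le>l. (real (k choose (l - p)) * G l j) * (lam ^ r * real (Suc r choose p)))" for r
  proof -
    have "real ((k + r + 1) choose l) = (\<Sum>p\<le>l. real (Suc r choose p) * real (k choose (l - p)))" for l
      using vandermonde[where r=l and m="Suc r" and n=k] by (simp add: algebra_simps flip: of_nat_mult of_nat_sum)
    then show ?thesis
      by (simp add: choose_comb_def sum_distrib_left sum_distrib_right algebra_simps)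
  qed
  have "(\<lambda>r. \<Sum>l\<le>m. \<Sum>p\<le>l. (real (k choose (l - p)) * G l j) * (lam ^ r * real (Suc r choose p)))
     sums (\<Sum>l\<le>m. \<Sum>p\<le>l. (real (k choose (l - p)) * G l j) * cfac p)"
    by (intro sums_sum sums_mult cfac_sums)
  moreover have "(\<Sum>l\<le>m. \<Sum>p\<le>l. (real (k choose (l - p)) * G l j) * cfac p)
     = (\<Sum>l\<le>m. (\<Sum>p\<le>l. real (k choose (l - p)) * cfac p) * G l j)"
    by (simp add: sum_distrib_left sum_distrib_right mult_ac)
  ultimately show ?thesis unfolding e by simp
qed

lemma sum_D1_choose_comb_bursts:
  "(\<Sum>j\<in>phases. D1 i j * (\<Sum>r. lam ^ r * choose_comb m G (j, k + r + 1)))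
   = (\<Sum>l\<le>m. real (k choose l) * (\<Sum>p\<le>m - l. cfac p * (\<Sum>j\<in>phases. D1 i j * G (l + p) j)))"
proof -
  define X where "X l = (\<Sum>j\<in>phases. D1 i j * G l j)" for l
  have "(\<Sum>j\<in>phases. D1 i j * (\<Sum>r. lam ^ r * choose_comb m G (j, k + r + 1)))
      = (\<Sum>j\<in>phases. D1 i j * (\<Sum>l\<le>m. (\<Sum>p\<le>l. real (k choose (l - p)) * cfac p) * G l j))"
    using choose_comb_bursts_sums by (simp add: sums_iff)
  also have "\<dots> = (\<Sum>l\<le>m. (\<Sum>p\<le>l. real (k choose (l - p)) * cfac p) * X l)"
    by (simp add: X_def sum_distrib_left sum_distrib_right mult_ac)
      (subst sum.swap, rule sum.cong[OF refl], rule sum.swap)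
  also have "\<dots> = (\<Sum>l\<le>m. \<Sum>p\<le>l. (\<lambda>l' p. real (k choose l') * cfac p * X (l' + p)) (l - p) p)"
    by (intro sum.cong refl) (simp add: sum_distrib_right)
  also have "\<dots> = (\<Sum>l\<le>m. \<Sum>p\<le>m - l. real (k choose l) * cfac p * X (l + p))"
    by (rule sum_triangle_reindex)
  finally show ?thesis
    by (simp add: X_def sum_distrib_left mult_ac)
qed

lemma choose_comb_death:
  "real k * \<delta> * (choose_comb m G (i, k - 1) - choose_comb m G (i, k))
   = (\<Sum>l\<le>m. real (k choose l) * (- real l * \<delta> * G l i))"
proof -
  have "real k * \<delta> * (choose_comb m G (i, k - 1) - choose_comb m G (i, k))
     = (\<Sum>l\<le>m. \<delta> * G l i * (real k * real ((k - 1) choose l) - real k * real (k choose l)))"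
    by (simp add: choose_comb_def sum_distrib_left sum_subtractf[symmetric] algebra_simps)
  then show ?thesis
    by (simp only: binomial_pred_diff) (simp add: algebra_simps)
qed

lemma sum_Dmat_mult:
  assumes i: "i \<in> phases"
  shows "(\<Sum>j\<in>phases. Dmat N a b i j * v j) = (\<Sum>j\<in>phases - {i}. a i j * v j)
      - (arow i + brow i / (1 - lam)) * v i + cfac 0 * (\<Sum>j\<in>phases. D1 i j * v j)"
proof -
  have "(\<Sum>j\<in>phases. (if i = j then - arow i - brow i / (1 - lam) else a i j) * v j)
     = (- arow i - brow i / (1 - lam)) * v i + (\<Sum>j\<in>phases - {i}. a i j * v j)"
    using i by (subst sum.remove[of _ i]) (auto intro!: sum.cong)
  moreover have "(\<Sum>j\<in>phases. D1 i j / (1 - lam) * v j) = cfac 0 * (\<Sum>j\<in>phases. D1 i j * v j)"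
    by (simp add: cfac_def sum_distrib_left)
  ultimately show ?thesis
    using i by (simp add: Dmat_eq sum.distrib algebra_simps)
qed

text \<open>The generator maps functions polynomial in the level, written in the binomial basis
  \<open>n choose l\<close>, to functions of the same form; the coefficient of \<open>k choose l\<close> involves
  only the coefficients of index \<open>\<ge> l\<close>.\<close>
lemma generator_choose_comb:
  assumes i: "i \<in> phases"
  shows "jump_sum (choose_comb m G) i k - qrate i k * choose_comb m G (i, k)
     = (\<Sum>l\<le>m. real (k choose l) * ((\<Sum>j\<in>phases. Dmat N a b i j * G l j) - real l * \<delta> * G l i
          + (\<Sum>p\<in>{1..m - l}. cfac p * (\<Sum>j\<in>phases. D1 i j * G (l + p) j))))"
proof -
  have a: "(\<Sum>j\<in>phases - {i}. a i j * choose_comb m G (j, k))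
      = (\<Sum>l\<le>m. real (k choose l) * (\<Sum>j\<in>phases - {i}. a i j * G l j))"
    by (simp add: choose_comb_def sum_distrib_left sum_distrib_right mult_ac) (rule sum.swap)
  have q: "qrate i k * choose_comb m G (i, k)
      = (\<Sum>l\<le>m. real (k choose l) * ((arow i + brow i / (1 - lam)) * G l i)) + real k * \<delta> * choose_comb m G (i, k)"
    by (simp add: qrate_def choose_comb_def sum_distrib_left algebra_simps sum.distrib)
  have p0: "(\<Sum>p\<le>m - l. cfac p * X p) = cfac 0 * X 0 + (\<Sum>p\<in>{1..m - l}. cfac p * X p)" for l and X :: "nat \<Rightarrow> real"
    by (simp add: atMost_atLeast0 sum.atLeast_Suc_atMost)
  show ?thesis
    unfolding jump_sum_def sum_D1_choose_comb_bursts sum_Dmat_mult[OF i] a q p0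
    using choose_comb_death[of k m G i]
    by (simp add: sum.distrib[symmetric] sum_subtractf[symmetric] algebra_simps)
qed

definition \<theta> :: real where
  "\<theta> = (\<Sum>i\<in>phases. arow i + brow i / (1 - lam))"

lemma theta_ge: "i \<in> phases \<Longrightarrow> arow i + brow i / (1 - lam) \<le> \<theta>"
  unfolding \<theta>_def using arow_nonneg brow_nonneg lam1
  by (intro member_le_sum) (auto intro!: add_nonneg_nonneg divide_nonneg_pos)

lemma theta_nonneg: "\<theta> \<ge> 0"
  unfolding \<theta>_def using arow_nonneg brow_nonneg lam1
  by (intro sum_nonneg add_nonneg_nonneg divide_nonneg_pos) auto

definition Dshift :: "nat \<Rightarrow> nat \<Rightarrow> real" where
  "Dshift i j = Dmat N a b i j + (if i = j then \<theta> else 0)"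

lemma Dshift_nonneg: "i \<in> phases \<Longrightarrow> j \<in> phases \<Longrightarrow> Dshift i j \<ge> 0"
proof -
  assume ij: "i \<in> phases" "j \<in> phases"
  have "D1 i j / (1 - lam) \<ge> 0" using D1_nonneg[OF ij] lam1 by simp
  then show ?thesis
    using ij theta_ge[of i] a_nonneg[of i j] by (auto simp: Dshift_def Dmat_eq)
qed

lemma sum_Dshift_mult: "i \<in> phases \<Longrightarrow>
    (\<Sum>j\<in>phases. Dshift i j * v j) = (\<Sum>j\<in>phases. Dmat N a b i j * v j) + \<theta> * v i"
  by (simp add: Dshift_def distrib_right sum.distrib if_distrib[of "\<lambda>x. x * _"] cong: if_cong)

lemma Dshift_row_sum: "i \<in> phases \<Longrightarrow> (\<Sum>j\<in>phases. Dshift i j) = \<theta>"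
  using sum_Dshift_mult[of i "\<lambda>_. 1"] Dmat_row_sum by simp

text \<open>\<open>gfun p i t = (\<Sum>n. gcoef p n i * t ^ n / fact n)\<close> solves the triangular linear system
  \<open>g\<^sub>p' = (D + \<theta> + p\<delta>) g\<^sub>p + (\<Sum>l=1..p. cfac l * D1 g\<^sub>(\<^sub>p\<^sub>-\<^sub>l\<^sub>))\<close>, \<open>g\<^sub>p(0) = [p = 0]\<close>;
  the shift by \<open>\<theta>\<close> makes every coefficient nonnegative.\<close>
primrec gcoef :: "nat \<Rightarrow> nat \<Rightarrow> nat \<Rightarrow> real" where
  "gcoef p 0 i = (if p = 0 then 1 else 0)"
| "gcoef p (Suc n) i = (\<Sum>j\<in>phases. Dmat N a b i j * gcoef p n j) + (\<theta> + real p * \<delta>) * gcoef p n i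
     + (\<Sum>l\<in>{1..p}. cfac l * (\<Sum>j\<in>phases. D1 i j * gcoef (p - l) n j))"

primrec gmaj :: "nat \<Rightarrow> nat \<Rightarrow> real" where
  "gmaj p 0 = (if p = 0 then 1 else 0)"
| "gmaj p (Suc n) = (\<theta> + real p * \<delta>) * gmaj p n + (\<Sum>l\<in>{1..p}. cfac l * normD1 * gmaj (p - l) n)"

lemma gmaj_nonneg: "gmaj p n \<ge> 0"
  by (induction n arbitrary: p)
    (auto intro!: add_nonneg_nonneg mult_nonneg_nonneg sum_nonneg theta_nonneg cfac_nonneg normD1_nonneg
      simp: less_imp_le[OF delta])

lemma gcoef_Suc_Dshift:
  assumes "i \<in> phases"
  shows "gcoef p (Suc n) i = (\<Sum>j\<in>phases. Dshift i j * gcoef p n j)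
     + real p * \<delta> * gcoef p n i + (\<Sum>l\<in>{1..p}. cfac l * (\<Sum>j\<in>phases. D1 i j * gcoef (p - l) n j))"
  using sum_Dshift_mult[OF assms, of "\<lambda>j. gcoef p n j"] by (simp add: algebra_simps)

lemma gcoef_nonneg: "i \<in> phases \<Longrightarrow> gcoef p n i \<ge> 0"
proof (induction n arbitrary: p i)
  case (Suc n)
  have "0 \<le> (\<Sum>j\<in>phases. Dshift i j * gcoef p n j) + real p * \<delta> * gcoef p n i
      + (\<Sum>l\<in>{1..p}. cfac l * (\<Sum>j\<in>phases. D1 i j * gcoef (p - l) n j))"
    using Suc Dshift_nonneg D1_nonneg delta cfac_nonneg
    by (intro add_nonneg_nonneg mult_nonneg_nonneg sum_nonneg) auto
  then show ?case
    by (simp only: gcoef_Suc_Dshift[OF Suc.prems])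
qed simp

lemma gcoef_le_gmaj: "i \<in> phases \<Longrightarrow> gcoef p n i \<le> gmaj p n"
proof (induction n arbitrary: p i)
  case (Suc n)
  have "(\<Sum>j\<in>phases. Dshift i j * gcoef p n j) \<le> (\<Sum>j\<in>phases. Dshift i j * gmaj p n)"
    using Suc Dshift_nonneg by (intro sum_mono mult_left_mono) auto
  also have "\<dots> = \<theta> * gmaj p n"
    using Suc.prems Dshift_row_sum[of i] by (simp add: sum_distrib_right[symmetric])
  finally have shift: "(\<Sum>j\<in>phases. Dshift i j * gcoef p n j) \<le> \<theta> * gmaj p n" .
  have "cfac l * (\<Sum>j\<in>phases. D1 i j * gcoef (p - l) n j) \<le> cfac l * normD1 * gmaj (p - l) n" for l
  proof -
    have "(\<Sum>j\<in>phases. D1 i j * gcoef (p - l) n j) \<le> (\<Sum>j\<in>phases. D1 i j * gmaj (p - l) n)"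
      using Suc D1_nonneg by (intro sum_mono mult_left_mono) auto
    also have "\<dots> = brow i * gmaj (p - l) n"
      by (simp add: brow_def sum_distrib_right)
    also have "\<dots> \<le> normD1 * gmaj (p - l) n"
      using brow_le_normD1[OF Suc.prems] gmaj_nonneg by (intro mult_right_mono) auto
    finally show ?thesis
      using cfac_nonneg by (simp add: mult.assoc mult_left_mono)
  qed
  then have "(\<Sum>l\<in>{1..p}. cfac l * (\<Sum>j\<in>phases. D1 i j * gcoef (p - l) n j))
      \<le> (\<Sum>l\<in>{1..p}. cfac l * normD1 * gmaj (p - l) n)"
    by (intro sum_mono)
  moreover have "real p * \<delta> * gcoef p n i \<le> real p * \<delta> * gmaj p n"
    using Suc delta by (intro mult_left_mono) auto
  ultimately show ?case
    using shift unfolding gcoef_Suc_Dshift[OF Suc.prems] gmaj.simps distrib_right by linarith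
qed simp

definition gmaj_rate :: "nat \<Rightarrow> real" where
  "gmaj_rate P = \<theta> + real P * \<delta> + (\<Sum>l\<in>{1..P}. cfac l) * normD1 + 1"

lemma gmaj_rate_ge_1: "gmaj_rate P \<ge> 1"
  unfolding gmaj_rate_def using theta_nonneg delta normD1_nonneg cfac_nonneg
  by (auto intro!: add_nonneg_nonneg mult_nonneg_nonneg sum_nonneg)

lemma gmaj_le_power: "p \<le> P \<Longrightarrow> gmaj p n \<le> gmaj_rate P ^ n"
proof (induction n arbitrary: p)
  case (Suc n)
  have "(\<theta> + real p * \<delta>) * gmaj p n \<le> (\<theta> + real P * \<delta>) * gmaj_rate P ^ n"
    using Suc theta_nonneg delta gmaj_nonneg[of p n]
    by (intro mult_mono) (auto intro!: add_nonneg_nonneg mult_nonneg_nonneg)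
  moreover have "(\<Sum>l\<in>{1..p}. cfac l * normD1 * gmaj (p - l) n) \<le> (\<Sum>l\<in>{1..P}. cfac l * normD1 * gmaj_rate P ^ n)"
  proof -
    have "(\<Sum>l\<in>{1..p}. cfac l * normD1 * gmaj (p - l) n) \<le> (\<Sum>l\<in>{1..p}. cfac l * normD1 * gmaj_rate P ^ n)"
      using Suc cfac_nonneg normD1_nonneg by (intro sum_mono mult_left_mono) (auto intro!: mult_nonneg_nonneg)
    also have "\<dots> \<le> (\<Sum>l\<in>{1..P}. cfac l * normD1 * gmaj_rate P ^ n)"
      using Suc.prems cfac_nonneg normD1_nonneg gmaj_rate_ge_1[of P]
      by (intro sum_mono2) (auto intro!: mult_nonneg_nonneg)
    finally show ?thesis .
  qed
  ultimately have "gmaj p (Suc n) \<le> (\<theta> + real P * \<delta> + (\<Sum>l\<in>{1..P}. cfac l) * normD1) * gmaj_rate P ^ n"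
    by (simp add: distrib_right sum_distrib_right)
  also have "\<dots> \<le> gmaj_rate P * gmaj_rate P ^ n"
    using gmaj_rate_ge_1 by (intro mult_right_mono) (auto simp: gmaj_rate_def)
  finally show ?case by simp
qed simp

lemma exp_type_gmaj: "exp_type (gmaj p)"
  unfolding exp_type_def using gmaj_le_power[of p p] gmaj_nonneg[of p] gmaj_rate_ge_1[of p]
  by (intro exI[of _ 1] exI[of _ "gmaj_rate p"]) auto

lemma exp_type_gcoef: "i \<in> phases \<Longrightarrow> exp_type (\<lambda>n. gcoef p n i)"
proof -
  assume i: "i \<in> phases"
  obtain C R where "R \<ge> 0" "\<And>n. \<bar>gmaj p n\<bar> \<le> C * R ^ n"
    using exp_type_gmaj[of p] by (auto simp: exp_type_def)
  moreover have "\<bar>gcoef p n i\<bar> \<le> \<bar>gmaj p n\<bar>" for n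
    using gcoef_nonneg[OF i] gcoef_le_gmaj[OF i] gmaj_nonneg by simp
  ultimately show ?thesis
    unfolding exp_type_def by (meson order_trans)
qed

definition gfun :: "nat \<Rightarrow> nat \<Rightarrow> real \<Rightarrow> real" where
  "gfun p i t = egf (\<lambda>n. gcoef p n i) t"

definition dgfun :: "nat \<Rightarrow> nat \<Rightarrow> real \<Rightarrow> real" where
  "dgfun p i t = (\<Sum>j\<in>phases. Dmat N a b i j * gfun p j t) + (\<theta> + real p * \<delta>) * gfun p i t
     + (\<Sum>l\<in>{1..p}. cfac l * (\<Sum>j\<in>phases. D1 i j * gfun (p - l) j t))"

lemma egf_sum_gcoef: "egf (\<lambda>n. \<Sum>j\<in>phases. c j * gcoef q n j) t = (\<Sum>j\<in>phases. c j * gfun q j t)"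
  unfolding gfun_def by (rule egf_sum_cmult) (auto intro: exp_type_gcoef)

lemma DERIV_gfun:
  assumes i: "i \<in> phases"
  shows "((\<lambda>t. gfun p i t) has_real_derivative dgfun p i t) (at t)"
proof -
  define burst where "burst n = (\<Sum>l\<in>{1..p}. cfac l * (\<Sum>j\<in>phases. D1 i j * gcoef (p - l) n j))" for n
  have "exp_type (\<lambda>n. \<Sum>j\<in>phases. c j * gcoef q n j)" for c q
    by (intro exp_type_sum exp_type_cmult exp_type_gcoef) auto
  moreover have "exp_type burst"
    unfolding burst_def by (intro exp_type_sum exp_type_cmult exp_type_gcoef) auto
  moreover have "egf burst t = (\<Sum>l\<in>{1..p}. cfac l * (\<Sum>j\<in>phases. D1 i j * gfun (p - l) j t))"
    unfolding burst_def
    by (subst egf_sum_cmult) (auto intro!: exp_type_sum exp_type_cmult exp_type_gcoef simp only: egf_sum_gcoef)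
  ultimately have "egf (\<lambda>n. gcoef p (Suc n) i) t = dgfun p i t"
    unfolding gcoef.simps burst_def[symmetric] dgfun_def
    by (simp only: egf_add exp_type_add exp_type_cmult exp_type_gcoef[OF i] egf_sum_gcoef
        egf_cmult gfun_def)
  then show ?thesis
    using DERIV_egf[OF exp_type_gcoef[OF i], of p t] unfolding gfun_def by simp
qed

lemma gfun_at_0: "gfun p i 0 = (if p = 0 then 1 else 0)"
  by (simp add: gfun_def egf_0)

lemma gfun_nonneg: "i \<in> phases \<Longrightarrow> t \<ge> 0 \<Longrightarrow> gfun p i t \<ge> 0"
  unfolding gfun_def using gcoef_nonneg by (intro egf_nonneg exp_type_gcoef) auto

lemma continuous_on_gfun: "i \<in> phases \<Longrightarrow> continuous_on S (gfun p i)"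
  unfolding gfun_def[abs_def] using continuous_on_egf[OF exp_type_gcoef] by auto

lemma continuous_on_dgfun: "i \<in> phases \<Longrightarrow> continuous_on S (dgfun p i)"
  unfolding dgfun_def[abs_def] by (intro continuous_intros continuous_on_gfun) auto

lemma gfun_le_egf_gmaj: "i \<in> phases \<Longrightarrow> 0 \<le> \<tau> \<Longrightarrow> \<tau> \<le> T \<Longrightarrow> gfun p i \<tau> \<le> egf (gmaj p) T"
proof -
  assume i: "i \<in> phases" and t: "0 \<le> \<tau>" "\<tau> \<le> T"
  have "gfun p i \<tau> \<le> egf (gmaj p) \<tau>"
    unfolding gfun_def using gcoef_le_gmaj[OF i] t by (intro egf_mono exp_type_gcoef[OF i] exp_type_gmaj) auto
  also have "\<dots> \<le> egf (gmaj p) T"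
    using t gmaj_nonneg by (intro egf_mono_arg exp_type_gmaj) auto
  finally show ?thesis .
qed

text \<open>The candidate for \<open>E[M(t) choose m]\<close> started in \<open>(i, k)\<close>; it vanishes outside the phases.\<close>
definition fmom :: "nat \<Rightarrow> nat \<times> nat \<Rightarrow> real \<Rightarrow> real" where
  "fmom m x t = (case x of (i, k) \<Rightarrow>
     if i \<in> phases then exp (- (\<theta> + real m * \<delta>) * t) * choose_comb m (\<lambda>l j. gfun (m - l) j t) (i, k) else 0)"

definition dfmom :: "nat \<Rightarrow> nat \<times> nat \<Rightarrow> real \<Rightarrow> real" where
  "dfmom m x t = (case x of (i, k) \<Rightarrow>
     exp (- (\<theta> + real m * \<delta>) * t) * (\<Sum>l\<le>m. real (k choose l) * dgfun (m - l) i t)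
     - (\<theta> + real m * \<delta>) * fmom m x t)"

lemma DERIV_fmom: "i \<in> phases \<Longrightarrow> ((\<lambda>t. fmom m (i, k) t) has_real_derivative dfmom m (i, k) t) (at t)"
proof -
  assume i: "i \<in> phases"
  have "((\<lambda>t. exp (- (\<theta> + real m * \<delta>) * t) * (\<Sum>l\<le>m. real (k choose l) * gfun (m - l) i t))
     has_real_derivative
     (exp (- (\<theta> + real m * \<delta>) * t) * (- (\<theta> + real m * \<delta>)) * (\<Sum>l\<le>m. real (k choose l) * gfun (m - l) i t)
      + exp (- (\<theta> + real m * \<delta>) * t) * (\<Sum>l\<le>m. real (k choose l) * dgfun (m - l) i t))) (at t)"
    by (auto intro!: derivative_eq_intros DERIV_gfun[OF i] DERIV_sum simp: algebra_simps)
  then show ?thesis using i by (simp add: fmom_def dfmom_def choose_comb_def algebra_simps)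
qed

lemma continuous_on_fmom: "i \<in> phases \<Longrightarrow> continuous_on S (fmom m (i, k))"
  using DERIV_fmom by (meson DERIV_continuous continuous_at_imp_continuous_on)

lemma continuous_on_dfmom: "i \<in> phases \<Longrightarrow> continuous_on S (dfmom m (i, k))"
  unfolding dfmom_def[abs_def] by (auto intro!: continuous_intros continuous_on_dgfun continuous_on_fmom)

lemma fmom_nonneg: "t \<ge> 0 \<Longrightarrow> fmom m x t \<ge> 0"
  by (auto simp: fmom_def choose_comb_def split: prod.split intro!: mult_nonneg_nonneg sum_nonneg gfun_nonneg)

lemma fmom_at_0: "i \<in> phases \<Longrightarrow> fmom m (i, k) 0 = real (k choose m)"
proof -
  assume "i \<in> phases"
  then have "fmom m (i, k) 0 = (\<Sum>l\<le>m. real (k choose l) * (if m - l = 0 then 1 else 0))"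
    by (simp add: fmom_def choose_comb_def gfun_at_0)
  also have "\<dots> = (\<Sum>l\<in>{m}. real (k choose l))"
    by (rule sum.mono_neutral_cong_right) auto
  finally show ?thesis by simp
qed

lemma summable_fmom_bursts: "j \<in> phases \<Longrightarrow> summable (\<lambda>r. lam ^ r * fmom m (j, k + r + 1) t)"
proof -
  assume j: "j \<in> phases"
  have "summable (\<lambda>r. exp (- (\<theta> + real m * \<delta>) * t)
      * (lam ^ r * choose_comb m (\<lambda>l j. gfun (m - l) j t) (j, k + r + 1)))"
    by (intro summable_mult sums_summable[OF choose_comb_bursts_sums])
  then show ?thesis using j by (simp add: fmom_def mult_ac)
qed

lemma fmom_backward_eq:
  assumes i: "i \<in> phases"
  shows "jump_sum (\<lambda>z. fmom m z t) i k = dfmom m (i, k) t + qrate i k * fmom m (i, k) t"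
proof -
  define E where "E = exp (- (\<theta> + real m * \<delta>) * t)"
  define G where "G = (\<lambda>l j. gfun (m - l) j t)"
  have "summable (\<lambda>r. lam ^ r * choose_comb m G (j, k + r + 1))" for j
    by (rule sums_summable[OF choose_comb_bursts_sums])
  then have "jump_sum (\<lambda>z. fmom m z t) i k = E * jump_sum (choose_comb m G) i k"
    using i by (intro jump_sum_scale) (auto simp: fmom_def E_def G_def)
  also have "jump_sum (choose_comb m G) i k = qrate i k * choose_comb m G (i, k)
      + (\<Sum>l\<le>m. real (k choose l) * (dgfun (m - l) i t - (\<theta> + real m * \<delta>) * G l i))"
  proof -
    have "dgfun (m - l) i t - (\<theta> + real m * \<delta>) * G l i
      = (\<Sum>j\<in>phases. Dmat N a b i j * G l j) - real l * \<delta> * G l i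
        + (\<Sum>p\<in>{1..m - l}. cfac p * (\<Sum>j\<in>phases. D1 i j * G (l + p) j))" if "l \<le> m" for l
      using that by (simp add: dgfun_def G_def diff_diff_add of_nat_diff algebra_simps)
    then have "(\<Sum>l\<le>m. real (k choose l) * (dgfun (m - l) i t - (\<theta> + real m * \<delta>) * G l i))
      = jump_sum (choose_comb m G) i k - qrate i k * choose_comb m G (i, k)"
      unfolding generator_choose_comb[OF i] by (intro sum.cong refl) simp
    then show ?thesis by simp
  qed
  finally show ?thesis
    using i by (simp add: dfmom_def fmom_def E_def G_def choose_comb_def sum_distrib_left algebra_simps
        sum_subtractf)
qed

lemma nn_integral_rate_fmom:
  assumes i: "i \<in> phases" and t: "t \<ge> 0"
  shows "(\<integral>\<^sup>+ z. ennreal (rate N a b \<delta> (i, k) z) * ennreal (fmom m z t) \<partial>count_space UNIV)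
     = ennreal (dfmom m (i, k) t + qrate i k * fmom m (i, k) t)"
  using nn_integral_rate_eq[OF i, of "\<lambda>z. fmom m z t" k] fmom_nonneg[OF t] summable_fmom_bursts
  by (simp add: fmom_backward_eq[OF i])

lemma dfmom_plus_nonneg: "i \<in> phases \<Longrightarrow> t \<ge> 0 \<Longrightarrow> dfmom m (i, k) t + qrate i k * fmom m (i, k) t \<ge> 0"
  using jump_sum_nonneg[of i "\<lambda>z. fmom m z t" k] fmom_nonneg summable_fmom_bursts
  by (simp add: fmom_backward_eq)

lemma dfmom_level_0:
  assumes i: "i \<in> phases"
  shows "dfmom m (i, 0) t = exp (- (\<theta> + real m * \<delta>) * t) * ((\<Sum>j\<in>phases. Dmat N a b i j * gfun m j t)
      + (\<Sum>l\<in>{1..m}. cfac l * (\<Sum>j\<in>phases. D1 i j * gfun (m - l) j t)))"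
proof -
  have "(\<Sum>l\<le>m. real (0 choose l) * dgfun (m - l) i t) = dgfun m i t"
    using sum_zero_choose[where m=m and f="\<lambda>l. dgfun (m - l) i t"] by simp
  moreover have "choose_comb m (\<lambda>l j. gfun (m - l) j t) (i, 0) = gfun m i t"
    using sum_zero_choose[where m=m and f="\<lambda>l. gfun (m - l) i t"] by (simp add: choose_comb_def)
  ultimately show ?thesis
    using i by (simp add: dfmom_def fmom_def dgfun_def algebra_simps)
qed

section \<open>Feller's minimal solution\<close>

text \<open>Feller's backward integral operator: stay in \<open>x\<close> up to time \<open>t\<close> and collect \<open>g x\<close>, or jump
  at time \<open>s\<close> to \<open>z\<close> and continue with \<open>G z (t - s)\<close>. Its iterates from \<open>0\<close> increase to the
  expectation of \<open>g\<close> under the minimal chain (\<open>Pexp_eq_SUP_feller_iter\<close>).\<close>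
definition jump_op :: "(nat \<times> nat \<Rightarrow> real \<Rightarrow> ennreal) \<Rightarrow> nat \<times> nat \<Rightarrow> real \<Rightarrow> ennreal" where
  "jump_op G x t = (\<integral>\<^sup>+ s. indicator {0..t} s * ennreal (exp (- qout N a b \<delta> x * s))
     * (\<integral>\<^sup>+ z. ennreal (rate N a b \<delta> x z) * G z (t - s) \<partial>count_space UNIV) \<partial>lborel)"

definition feller_op :: "(nat \<times> nat \<Rightarrow> ennreal) \<Rightarrow> (nat \<times> nat \<Rightarrow> real \<Rightarrow> ennreal) \<Rightarrow> nat \<times> nat \<Rightarrow> real \<Rightarrow> ennreal" where
  "feller_op g G x t = ennreal (exp (- qout N a b \<delta> x * t)) * g x + jump_op G x t"

lemma jump_op_integrand_measurable:
  assumes "\<And>z. G z \<in> borel_measurable borel"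
  shows "(\<lambda>s. indicator {0..t} s * ennreal (exp (- qout N a b \<delta> x * s))
           * (\<integral>\<^sup>+ z. ennreal (rate N a b \<delta> x z) * G z (t - s) \<partial>count_space UNIV)) \<in> borel_measurable lborel"
proof -
  have "(\<lambda>s. \<integral>\<^sup>+ z. ennreal (rate N a b \<delta> x z) * G z (t - s) \<partial>count_space UNIV) \<in> borel_measurable borel"
  proof (rule borel_measurable_nn_integral_count_space_pair)
    fix z
    have "(\<lambda>s. G z (t - s)) \<in> borel_measurable borel" using assms[of z] by measurable
    then show "(\<lambda>s. ennreal (rate N a b \<delta> x z) * G z (t - s)) \<in> borel_measurable borel" by measurable
  qed
  then show ?thesis by measurable
qed

lemma borel_measurable_jump_op:
  assumes G: "\<And>z. G z \<in> borel_measurable borel"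
  shows "jump_op G x \<in> borel_measurable borel"
proof -
  have "(\<lambda>(t::real, s::real). indicator {0..t} s :: ennreal) = (\<lambda>p. if 0 \<le> snd p \<and> snd p \<le> fst p then 1 else 0)"
    by (auto simp: indicator_def)
  also have "\<dots> \<in> borel_measurable (borel \<Otimes>\<^sub>M lborel)"
    by measurable
  finally have ind: "(\<lambda>(t::real, s::real). indicator {0..t} s :: ennreal) \<in> borel_measurable (borel \<Otimes>\<^sub>M lborel)" .
  have e: "(\<lambda>p::real \<times> real. ennreal (exp (- qout N a b \<delta> x * snd p))) \<in> borel_measurable (borel \<Otimes>\<^sub>M lborel)"
    by measurable
  have "(\<lambda>p::real \<times> real. \<integral>\<^sup>+ z. ennreal (rate N a b \<delta> x z) * G z (fst p - snd p) \<partial>count_space UNIV)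
      \<in> borel_measurable (borel \<Otimes>\<^sub>M lborel)"
  proof (rule borel_measurable_nn_integral_count_space_pair)
    fix z
    have "(\<lambda>p::real \<times> real. G z (fst p - snd p)) \<in> borel_measurable (borel \<Otimes>\<^sub>M lborel)"
      using G[of z] by measurable
    then show "(\<lambda>p::real \<times> real. ennreal (rate N a b \<delta> x z) * G z (fst p - snd p))
        \<in> borel_measurable (borel \<Otimes>\<^sub>M lborel)"
      by measurable
  qed
  with ind e have "(\<lambda>(t, s). indicator {0..t} s * ennreal (exp (- qout N a b \<delta> x * s))
        * (\<integral>\<^sup>+ z. ennreal (rate N a b \<delta> x z) * G z (t - s) \<partial>count_space UNIV)) \<in> borel_measurable (borel \<Otimes>\<^sub>M lborel)"
    by (simp add: case_prod_beta')
  then show ?thesis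
    unfolding jump_op_def[abs_def] by (rule lborel.borel_measurable_nn_integral)
qed

lemma jump_op_mono:
  assumes "\<And>z s. fst z \<in> phases \<Longrightarrow> 0 \<le> s \<Longrightarrow> s \<le> t \<Longrightarrow> G z s \<le> G' z s"
  shows "jump_op G x t \<le> jump_op G' x t"
proof -
  have "(\<integral>\<^sup>+ z. ennreal (rate N a b \<delta> x z) * G z (t - s) \<partial>count_space UNIV)
     \<le> (\<integral>\<^sup>+ z. ennreal (rate N a b \<delta> x z) * G' z (t - s) \<partial>count_space UNIV)" if "s \<in> {0..t}" for s
  proof (intro nn_integral_mono)
    fix z
    show "ennreal (rate N a b \<delta> x z) * G z (t - s) \<le> ennreal (rate N a b \<delta> x z) * G' z (t - s)"
      using assms[of z "t - s"] that
      by (cases "fst z \<in> phases") (auto intro: mult_left_mono simp: rate_outside_phases)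
  qed
  then show ?thesis
    unfolding jump_op_def by (intro nn_integral_mono) (auto intro: mult_left_mono simp: indicator_def)
qed

lemma jump_op_add:
  assumes "\<And>z. A z \<in> borel_measurable borel" "\<And>z. B z \<in> borel_measurable borel"
  shows "jump_op (\<lambda>z s. A z s + B z s) x t = jump_op A x t + jump_op B x t"
proof -
  have "jump_op (\<lambda>z s. A z s + B z s) x t = (\<integral>\<^sup>+ s. indicator {0..t} s * ennreal (exp (- qout N a b \<delta> x * s))
           * (\<integral>\<^sup>+ z. ennreal (rate N a b \<delta> x z) * A z (t - s) \<partial>count_space UNIV)
      + indicator {0..t} s * ennreal (exp (- qout N a b \<delta> x * s))
           * (\<integral>\<^sup>+ z. ennreal (rate N a b \<delta> x z) * B z (t - s) \<partial>count_space UNIV) \<partial>lborel)"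
    unfolding jump_op_def by (intro nn_integral_cong) (simp add: distrib_left nn_integral_add)
  also have "\<dots> = jump_op A x t + jump_op B x t"
    unfolding jump_op_def by (intro nn_integral_add jump_op_integrand_measurable assms)
  finally show ?thesis .
qed

lemma jump_op_cmult:
  assumes "\<And>z. B z \<in> borel_measurable borel"
  shows "jump_op (\<lambda>z s. c * B z s) x t = c * jump_op B x t"
proof -
  have "jump_op (\<lambda>z s. c * B z s) x t = (\<integral>\<^sup>+ s. c * (indicator {0..t} s * ennreal (exp (- qout N a b \<delta> x * s))
           * (\<integral>\<^sup>+ z. ennreal (rate N a b \<delta> x z) * B z (t - s) \<partial>count_space UNIV)) \<partial>lborel)"
    unfolding jump_op_def by (intro nn_integral_cong) (simp add: nn_integral_cmult[symmetric] mult_ac)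
  also have "\<dots> = c * jump_op B x t"
    unfolding jump_op_def by (intro nn_integral_cmult jump_op_integrand_measurable assms)
  finally show ?thesis .
qed

lemma nn_integral_jump_op:
  fixes g :: "nat \<times> nat \<Rightarrow> ennreal"
  assumes G: "\<And>z y. G z y \<in> borel_measurable borel"
  shows "(\<integral>\<^sup>+ y. jump_op (\<lambda>z. G z y) x t * g y \<partial>count_space UNIV)
    = jump_op (\<lambda>z s. \<integral>\<^sup>+ y. G z y s * g y \<partial>count_space UNIV) x t"
proof -
  define H where "H s y = indicator {0..t} s * ennreal (exp (- qout N a b \<delta> x * s))
     * (\<integral>\<^sup>+ z. ennreal (rate N a b \<delta> x z) * G z y (t - s) \<partial>count_space UNIV)" for s y
  have H: "(\<lambda>s. H s y) \<in> borel_measurable lborel" for y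
    unfolding H_def by (rule jump_op_integrand_measurable[OF G])
  have "(\<integral>\<^sup>+ y. jump_op (\<lambda>z. G z y) x t * g y \<partial>count_space UNIV)
      = (\<integral>\<^sup>+ y. (\<integral>\<^sup>+ s. H s y * g y \<partial>lborel) \<partial>count_space UNIV)"
    unfolding jump_op_def H_def[symmetric] by (intro nn_integral_cong nn_integral_multc[symmetric] H)
  also have "\<dots> = (\<integral>\<^sup>+ s. (\<integral>\<^sup>+ y. H s y * g y \<partial>count_space UNIV) \<partial>lborel)"
    using H by (intro nn_integral_count_space_nn_integral[symmetric]) auto
  also have "\<dots> = jump_op (\<lambda>z s. \<integral>\<^sup>+ y. G z y s * g y \<partial>count_space UNIV) x t"
    unfolding jump_op_def
  proof (intro nn_integral_cong)
    fix s
    have "(\<integral>\<^sup>+ y. (\<integral>\<^sup>+ z. ennreal (rate N a b \<delta> x z) * G z y (t - s) \<partial>count_space UNIV) * g y \<partial>count_space UNIV)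
       = (\<integral>\<^sup>+ z. (\<integral>\<^sup>+ y. ennreal (rate N a b \<delta> x z) * (G z y (t - s) * g y) \<partial>count_space UNIV) \<partial>count_space UNIV)"
      by (subst nn_integral_count_space_nn_integral[symmetric])
        (auto intro!: nn_integral_cong simp: nn_integral_multc[symmetric] mult.assoc)
    then show "(\<integral>\<^sup>+ y. H s y * g y \<partial>count_space UNIV) = indicator {0..t} s * ennreal (exp (- qout N a b \<delta> x * s))
        * (\<integral>\<^sup>+ z. ennreal (rate N a b \<delta> x z) * (\<integral>\<^sup>+ y. G z y (t - s) * g y \<partial>count_space UNIV) \<partial>count_space UNIV)"
      unfolding H_def by (simp add: nn_integral_cmult mult.assoc)
  qed
  finally show ?thesis .
qed

lemma feller_op_mono: "jump_op A x t \<le> jump_op B x t \<Longrightarrow> feller_op g A x t \<le> feller_op g B x t"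
  unfolding feller_op_def by (rule add_left_mono)

definition choose_level :: "nat \<Rightarrow> nat \<times> nat \<Rightarrow> ennreal" where
  "choose_level m z = ennreal (real (snd z choose m))"

text \<open>Integrate the backward equation \<open>fmom_backward_eq\<close> over the first holding time.\<close>
lemma feller_op_fmom:
  assumes i: "i \<in> phases" and t: "t \<ge> 0"
  shows "feller_op (choose_level m) (\<lambda>z s. ennreal (fmom m z s)) (i, k) t = ennreal (fmom m (i, k) t)"
proof -
  define q where "q = qrate i k"
  have q: "qout N a b \<delta> (i, k) = q" using i by (simp add: q_def qout_eq_qrate)
  define f where "f s = exp (- q * s) * (dfmom m (i, k) (t - s) + q * fmom m (i, k) (t - s))" for s
  define F where "F s = - exp (- q * s) * fmom m (i, k) (t - s)" for s
  have Fd: "(F has_real_derivative f s) (at s)" for s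
    unfolding F_def f_def
    by (rule derivative_eq_intros refl DERIV_chain2[OF DERIV_fmom[OF i]] | simp)+
      (simp add: algebra_simps)
  have f0: "0 \<le> f s" if "s \<in> {0..t}" for s
    unfolding f_def q_def using dfmom_plus_nonneg[OF i, of "t - s" m k] that by auto
  have "continuous_on UNIV (\<lambda>s. dfmom m (i, k) (t - s))" "continuous_on UNIV (\<lambda>s. fmom m (i, k) (t - s))"
    by (auto intro!: continuous_on_compose2[OF continuous_on_dfmom[OF i]]
        continuous_on_compose2[OF continuous_on_fmom[OF i]] continuous_intros)
  then have fm: "f \<in> borel_measurable borel"
    unfolding f_def by (intro borel_measurable_continuous_onI continuous_intros)
  have "jump_op (\<lambda>z s. ennreal (fmom m z s)) (i, k) t = (\<integral>\<^sup>+ s\<in>{0..t}. ennreal (f s) \<partial>lborel)"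
    unfolding jump_op_def q
  proof (intro nn_integral_cong)
    fix s :: real
    show "indicator {0..t} s * ennreal (exp (- q * s)) *
         (\<integral>\<^sup>+ z. ennreal (rate N a b \<delta> (i, k) z) * ennreal (fmom m z (t - s)) \<partial>count_space UNIV)
         = ennreal (f s) * indicator {0..t} s"
      using nn_integral_rate_fmom[OF i, of "t - s" k m] dfmom_plus_nonneg[OF i, of "t - s" m k]
      by (cases "s \<in> {0..t}") (simp_all add: f_def q_def ennreal_mult'' mult_ac)
  qed
  also have "\<dots> = ennreal (F t - F 0)"
    by (rule nn_integral_FTC_Icc[OF fm _ f0 t]) (use Fd in auto)
  finally have jump: "jump_op (\<lambda>z s. ennreal (fmom m z s)) (i, k) t = ennreal (F t - F 0)" .
  have "F 0 \<le> F t"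
    by (rule deriv_nonneg_imp_mono[OF _ f0 t]) (use Fd in auto)
  then have "feller_op (choose_level m) (\<lambda>z s. ennreal (fmom m z s)) (i, k) t
      = ennreal (exp (- q * t) * real (k choose m) + (F t - F 0))"
    unfolding feller_op_def jump q choose_level_def by (simp add: ennreal_mult ennreal_plus)
  also have "exp (- q * t) * real (k choose m) + (F t - F 0) = fmom m (i, k) t"
    unfolding F_def using fmom_at_0[OF i, of m k] by simp
  finally show ?thesis .
qed

lemma Pit_Suc: "Pit (Suc n) a b \<delta> N x y t
    = (if x = y then ennreal (exp (- qout N a b \<delta> x * t)) else 0) + jump_op (\<lambda>z. Pit n a b \<delta> N z y) x t"
  by (simp add: jump_op_def)

lemma Pit_measurable: "(\<lambda>t. Pit n a b \<delta> N x y t) \<in> borel_measurable borel"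
proof (induction n arbitrary: x)
  case (Suc n)
  have "(\<lambda>t. Pit (Suc n) a b \<delta> N x y t)
      = (\<lambda>t. (if x = y then ennreal (exp (- qout N a b \<delta> x * t)) else 0) + jump_op (\<lambda>z. Pit n a b \<delta> N z y) x t)"
    by (simp only: Pit_Suc)
  moreover have "jump_op (\<lambda>z. Pit n a b \<delta> N z y) x \<in> borel_measurable borel"
    using Suc.IH by (intro borel_measurable_jump_op) (simp add: eta_contract_eq)
  ultimately show ?case by simp
next
  case 0
  have "(\<lambda>t. Pit 0 a b \<delta> N x y t) = (\<lambda>_. 0)" by simp
  then show ?case by simp
qed

lemma Pit_mono: "Pit n a b \<delta> N x y t \<le> Pit (Suc n) a b \<delta> N x y t"
proof (induction n arbitrary: x y t)
  case (Suc n)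
  then show ?case
    unfolding Pit_Suc[of n] Pit_Suc[of "Suc n"] by (intro add_left_mono jump_op_mono) auto
qed simp

lemma nn_integral_Pit_eq_feller_iter:
  "(\<integral>\<^sup>+ y. Pit n a b \<delta> N x y t * g y \<partial>count_space UNIV) = (feller_op g ^^ n) (\<lambda>_ _. 0) x t"
proof (induction n arbitrary: x t)
  case (Suc n)
  have "(\<integral>\<^sup>+ y. Pit (Suc n) a b \<delta> N x y t * g y \<partial>count_space UNIV)
      = (\<integral>\<^sup>+ y. (if x = y then ennreal (exp (- qout N a b \<delta> x * t)) else 0) * g y \<partial>count_space UNIV)
        + (\<integral>\<^sup>+ y. jump_op (\<lambda>z. Pit n a b \<delta> N z y) x t * g y \<partial>count_space UNIV)"
    unfolding Pit_Suc distrib_right by (rule nn_integral_add) auto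
  also have "\<dots> = ennreal (exp (- qout N a b \<delta> x * t)) * g x + jump_op ((feller_op g ^^ n) (\<lambda>_ _. 0)) x t"
    by (simp add: nn_integral_count_space_singleton nn_integral_jump_op Pit_measurable Suc.IH)
  also have "\<dots> = feller_op g ((feller_op g ^^ n) (\<lambda>_ _. 0)) x t"
    by (simp only: feller_op_def)
  finally show ?case by simp
qed simp

lemma feller_iter_measurable: "(feller_op g ^^ n) (\<lambda>_ _. 0) z \<in> borel_measurable borel"
proof -
  have "(\<lambda>t. \<integral>\<^sup>+ y. Pit n a b \<delta> N z y t * g y \<partial>count_space UNIV) \<in> borel_measurable borel"
  proof (rule borel_measurable_nn_integral_count_space_pair)
    fix y
    show "(\<lambda>t. Pit n a b \<delta> N z y t * g y) \<in> borel_measurable borel"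
      using Pit_measurable[of n z y] by measurable
  qed
  then show ?thesis by (simp add: nn_integral_Pit_eq_feller_iter)
qed

definition Pexp :: "(nat \<times> nat \<Rightarrow> ennreal) \<Rightarrow> nat \<times> nat \<Rightarrow> real \<Rightarrow> ennreal" where
  "Pexp g x t = (\<integral>\<^sup>+ y. Ptrans a b \<delta> N x y t * g y \<partial>count_space UNIV)"

lemma Pexp_eq_SUP_feller_iter: "Pexp g x t = (SUP n. (feller_op g ^^ n) (\<lambda>_ _. 0) x t)"
proof -
  have "Pexp g x t = (\<integral>\<^sup>+ y. (SUP n. Pit n a b \<delta> N x y t * g y) \<partial>count_space UNIV)"
    unfolding Pexp_def Ptrans_def by (simp add: SUP_mult_right_ennreal)
  also have "\<dots> = (SUP n. \<integral>\<^sup>+ y. Pit n a b \<delta> N x y t * g y \<partial>count_space UNIV)"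
  proof (intro nn_integral_monotone_convergence_SUP)
    show "incseq (\<lambda>n y. Pit n a b \<delta> N x y t * g y)"
      using Pit_mono by (intro incseq_SucI le_funI mult_right_mono) auto
  qed auto
  finally show ?thesis by (simp add: nn_integral_Pit_eq_feller_iter)
qed

lemma feller_iter_le_fmom:
  "fst z \<in> phases \<Longrightarrow> 0 \<le> \<tau> \<Longrightarrow> (feller_op (choose_level m) ^^ n) (\<lambda>_ _. 0) z \<tau> \<le> ennreal (fmom m z \<tau>)"
proof (induction n arbitrary: z \<tau>)
  case (Suc n)
  obtain i k where z: "z = (i, k)" by (cases z)
  have "(feller_op (choose_level m) ^^ Suc n) (\<lambda>_ _. 0) z \<tau>
      = feller_op (choose_level m) ((feller_op (choose_level m) ^^ n) (\<lambda>_ _. 0)) z \<tau>"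
    by simp
  also have "\<dots> \<le> feller_op (choose_level m) (\<lambda>z s. ennreal (fmom m z s)) z \<tau>"
    by (intro feller_op_mono jump_op_mono Suc.IH) auto
  also have "\<dots> = ennreal (fmom m z \<tau>)"
    using feller_op_fmom[of i \<tau> m k] Suc.prems z by simp
  finally show ?case .
qed simp

lemma Pexp_le_fmom: "fst z \<in> phases \<Longrightarrow> 0 \<le> \<tau> \<Longrightarrow> Pexp (choose_level m) z \<tau> \<le> ennreal (fmom m z \<tau>)"
  unfolding Pexp_eq_SUP_feller_iter by (intro SUP_least feller_iter_le_fmom)

lemma Pit_outside_phases: "fst x \<in> phases \<Longrightarrow> fst y \<notin> phases \<Longrightarrow> Pit n a b \<delta> N x y t = 0"
proof (induction n arbitrary: x t)
  case 0
  then show ?case by simp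
next
  case (Suc n)
  have xy: "x \<noteq> y" using Suc.prems by auto
  have zero: "ennreal (rate N a b \<delta> x z) * Pit n a b \<delta> N z y \<tau> = 0" for z \<tau>
  proof (cases "fst z \<in> phases")
    case True
    then show ?thesis using Suc.IH[of z \<tau>] Suc.prems by simp
  qed (simp add: rate_outside_phases)
  have "(\<integral>\<^sup>+ z. ennreal (rate N a b \<delta> x z) * Pit n a b \<delta> N z y (t - s) \<partial>count_space UNIV) = 0" for s
    by (simp add: zero)
  then show ?case using xy by simp
qed

lemma Ptrans_outside_phases: "fst x \<in> phases \<Longrightarrow> fst y \<notin> phases \<Longrightarrow> Ptrans a b \<delta> N x y t = 0"
  unfolding Ptrans_def using Pit_outside_phases by simp

lemma sum_Bcal_eq_Pexp: "i \<in> phases \<Longrightarrow> (\<Sum>j\<in>phases. Bcal a b \<delta> N m i j t) = Pexp (choose_level m) (i, 0) t"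
proof -
  assume i: "i \<in> phases"
  have "Pexp (choose_level m) (i, 0) t = (\<integral>\<^sup>+ j. \<integral>\<^sup>+ n. Ptrans a b \<delta> N (i, 0) (j, n) t
      * choose_level m (j, n) \<partial>count_space UNIV \<partial>count_space UNIV)"
    unfolding Pexp_def
    using nn_integral_fst_count_space[of "\<lambda>y. Ptrans a b \<delta> N (i, 0) y t * choose_level m y"] by simp
  also have "\<dots> = (\<integral>\<^sup>+ j. Bcal a b \<delta> N m i j t * indicator phases j \<partial>count_space UNIV)"
  proof (intro nn_integral_cong)
    fix j :: nat
    show "(\<integral>\<^sup>+ n. Ptrans a b \<delta> N (i, 0) (j, n) t * choose_level m (j, n) \<partial>count_space UNIV)
        = Bcal a b \<delta> N m i j t * indicator phases j"
    proof (cases "j \<in> phases")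
      case True
      have "(\<integral>\<^sup>+ n. Ptrans a b \<delta> N (i, 0) (j, n) t * choose_level m (j, n) \<partial>count_space UNIV)
          = (\<Sum>n. Ptrans a b \<delta> N (i, 0) (j, n) t * choose_level m (j, n))" by (rule nn_integral_count_space_nat)
      also have "\<dots> = Bcal a b \<delta> N m i j t" unfolding Bcal_def choose_level_def
        by (intro suminf_cong) (simp add: mult.commute ennreal_of_nat_eq_real_of_nat)
      finally show ?thesis using True by simp
    next
      case False
      then show ?thesis using Ptrans_outside_phases[of "(i, 0)" "(j, _)"] i by simp
    qed
  qed
  also have "\<dots> = (\<Sum>j\<in>phases. Bcal a b \<delta> N m i j t)"
    by (subst nn_integral_count_space_indicator[symmetric]) (auto simp: nn_integral_count_space_finite)
  finally show ?thesis by simp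
qed

section \<open>Uniqueness via a Lyapunov function\<close>

text \<open>The jump operator contracts \<open>lyap (i, k) t = exp (\<eta> t) \<beta>\<^sup>k\<close> by the factor \<open>\<kappa> < 1\<close>, and on
  \<open>[0, T]\<close> \<open>fmom\<close> is dominated by a multiple of it, so \<open>fmom\<close> and the \<open>n\<close>-th Feller iterate
  differ by \<open>O(\<kappa>\<^sup>n)\<close>. Any \<open>\<beta> \<in> (1, 1/lam)\<close> works.\<close>
definition \<beta> :: real where
  "\<beta> = (1 + 1 / lam) / 2"

lemma beta_gt_1: "\<beta> > 1"
  using lam0 lam1 by (simp add: \<beta>_def field_simps)

lemma lam_beta_lt_1: "lam * \<beta> < 1"
  using lam0 lam1 by (simp add: \<beta>_def field_simps)

definition \<Lambda> :: real where
  "\<Lambda> = (\<Sum>i\<in>phases. arow i + brow i * \<beta> / (1 - lam * \<beta>))"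

definition \<eta> :: real where
  "\<eta> = 2 * \<Lambda> + 1"

definition \<kappa> :: real where
  "\<kappa> = max (1 / 2) (1 / \<beta>)"

lemma Lambda_ge: "i \<in> phases \<Longrightarrow> arow i + brow i * \<beta> / (1 - lam * \<beta>) \<le> \<Lambda>"
  unfolding \<Lambda>_def using arow_nonneg brow_nonneg lam_beta_lt_1 beta_gt_1
  by (intro member_le_sum) (auto intro!: add_nonneg_nonneg divide_nonneg_pos mult_nonneg_nonneg)

lemma Lambda_nonneg: "\<Lambda> \<ge> 0"
  unfolding \<Lambda>_def using arow_nonneg brow_nonneg lam_beta_lt_1 beta_gt_1
  by (intro sum_nonneg) (auto intro!: add_nonneg_nonneg divide_nonneg_pos mult_nonneg_nonneg)

lemma kappa_pos: "\<kappa> > 0"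
  by (simp add: \<kappa>_def)

lemma kappa_lt_1: "\<kappa> < 1"
  using beta_gt_1 by (simp add: \<kappa>_def)

lemma lyap_contraction: "\<Lambda> + real k * \<delta> / \<beta> \<le> \<kappa> * (qrate i k + \<eta>)" if i: "i \<in> phases"
proof -
  have "1 / 2 * \<eta> \<le> \<kappa> * \<eta>"
    using Lambda_nonneg by (intro mult_right_mono) (auto simp: \<kappa>_def \<eta>_def)
  then have "\<Lambda> \<le> \<kappa> * \<eta>"
    by (simp add: \<eta>_def)
  moreover have "real k * \<delta> / \<beta> \<le> \<kappa> * qrate i k"
  proof -
    have "real k * \<delta> / \<beta> \<le> \<kappa> * (real k * \<delta>)"
      using mult_right_mono[of "1 / \<beta>" \<kappa> "real k * \<delta>"] delta by (simp add: \<kappa>_def)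
    also have "\<dots> \<le> \<kappa> * qrate i k"
      using arow_nonneg[OF i] brow_nonneg[OF i] lam1 kappa_pos by (intro mult_left_mono) (auto simp: qrate_def)
    finally show ?thesis .
  qed
  ultimately show ?thesis by (simp add: distrib_left)
qed

lemma power_bursts_sums: "(\<lambda>r. lam ^ r * \<beta> ^ (k + r + 1)) sums (\<beta> ^ (k + 1) / (1 - lam * \<beta>))"
proof -
  have "(\<lambda>r. \<beta> ^ (k + 1) * (lam * \<beta>) ^ r) sums (\<beta> ^ (k + 1) * (1 / (1 - lam * \<beta>)))"
    using lam_beta_lt_1 lam0 beta_gt_1 by (intro sums_mult geometric_sums) auto
  then show ?thesis by (simp add: power_add power_mult_distrib mult_ac)
qed

lemma jump_sum_power_le:
  assumes i: "i \<in> phases"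
  shows "jump_sum (\<lambda>z. \<beta> ^ snd z) i k \<le> \<beta> ^ k * (\<Lambda> + real k * \<delta> / \<beta>)"
proof -
  have "jump_sum (\<lambda>z. \<beta> ^ snd z) i k = \<beta> ^ k * (arow i + brow i * \<beta> / (1 - lam * \<beta>)) + real k * \<delta> * \<beta> ^ (k - 1)"
    using power_bursts_sums[of k]
    by (simp add: sums_iff jump_sum_def arow_def brow_def sum_distrib_left sum_distrib_right
        sum_divide_distrib algebra_simps)
  also have "real k * \<delta> * \<beta> ^ (k - 1) = \<beta> ^ k * (real k * \<delta> / \<beta>)"
    using beta_gt_1 by (cases k) (simp_all add: field_simps)
  also have "\<beta> ^ k * (arow i + brow i * \<beta> / (1 - lam * \<beta>)) \<le> \<beta> ^ k * \<Lambda>"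
    using Lambda_ge[OF i] beta_gt_1 by (intro mult_left_mono) auto
  finally show ?thesis by (simp add: distrib_left)
qed

definition lyap :: "nat \<times> nat \<Rightarrow> real \<Rightarrow> ennreal" where
  "lyap z s = ennreal (exp (\<eta> * s) * \<beta> ^ snd z)"

lemma lyap_measurable: "lyap z \<in> borel_measurable borel"
  unfolding lyap_def by measurable

lemma nn_integral_rate_lyap_le:
  assumes i: "i \<in> phases"
  shows "(\<integral>\<^sup>+ z. ennreal (rate N a b \<delta> (i, k) z) * lyap z s \<partial>count_space UNIV)
    \<le> ennreal (exp (\<eta> * s) * \<beta> ^ k * (\<Lambda> + real k * \<delta> / \<beta>))"
proof -
  have sb: "summable (\<lambda>r. lam ^ r * (e * \<beta> ^ (k + r + 1)))" for e
    using summable_mult[OF sums_summable[OF power_bursts_sums[of k]], of e] by (simp add: mult_ac)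
  have "summable (\<lambda>r. lam ^ r * \<beta> ^ (k + r + 1))"
    using sb[of 1] by simp
  then have "jump_sum (\<lambda>z. exp (\<eta> * s) * \<beta> ^ snd z) i k = exp (\<eta> * s) * jump_sum (\<lambda>z. \<beta> ^ snd z) i k"
    using i by (intro jump_sum_scale) auto
  moreover have "(\<integral>\<^sup>+ z. ennreal (rate N a b \<delta> (i, k) z) * lyap z s \<partial>count_space UNIV)
      = ennreal (jump_sum (\<lambda>z. exp (\<eta> * s) * \<beta> ^ snd z) i k)"
    unfolding lyap_def using beta_gt_1 sb
    by (intro nn_integral_rate_eq[OF i]) simp_all
  ultimately show ?thesis
    using jump_sum_power_le[OF i, of k] by (auto intro!: ennreal_leI simp: mult.assoc)
qed

lemma jump_op_lyap_le:
  assumes i: "i \<in> phases" and t: "t \<ge> 0"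
  shows "jump_op lyap (i, k) t \<le> ennreal \<kappa> * lyap (i, k) t"
proof -
  define q where "q = qrate i k"
  define c where "c = \<Lambda> + real k * \<delta> / \<beta>"
  define w where "w = exp (\<eta> * t) * \<beta> ^ k * c"
  have c0: "c \<ge> 0" and w0: "w \<ge> 0"
    using Lambda_nonneg beta_gt_1 delta by (simp_all add: c_def w_def)
  have "0 \<le> brow i / (1 - lam)" "0 \<le> real k * \<delta>"
    using brow_nonneg[OF i] lam1 delta by simp_all
  then have pos: "q + \<eta> > 0"
    using arow_nonneg[OF i] Lambda_nonneg unfolding q_def qrate_def \<eta>_def by linarith
  have inner: "(\<integral>\<^sup>+ z. ennreal (rate N a b \<delta> (i, k) z) * lyap z (t - s) \<partial>count_space UNIV)
      \<le> ennreal (exp (\<eta> * (t - s)) * \<beta> ^ k * c)" for s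
    unfolding c_def by (rule nn_integral_rate_lyap_le[OF i])
  have "jump_op lyap (i, k) t
      \<le> (\<integral>\<^sup>+ s. indicator {0..t} s * ennreal (exp (- q * s)) * ennreal (exp (\<eta> * (t - s)) * \<beta> ^ k * c) \<partial>lborel)"
    unfolding jump_op_def q_def qout_eq_qrate[OF i] by (intro nn_integral_mono mult_left_mono inner) auto
  also have "\<dots> = (\<integral>\<^sup>+ s. ennreal w * (ennreal (exp (- (q + \<eta>) * s)) * indicator {0..t} s) \<partial>lborel)"
  proof (intro nn_integral_cong)
    fix s
    have "exp (- q * s) * (exp (\<eta> * (t - s)) * \<beta> ^ k * c) = w * exp (- (q + \<eta>) * s)"
      by (simp add: w_def algebra_simps flip: exp_add)
    then have prod: "ennreal (exp (- q * s)) * ennreal (exp (\<eta> * (t - s)) * \<beta> ^ k * c)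
        = ennreal w * ennreal (exp (- (q + \<eta>) * s))"
      by (simp only: ennreal_mult'[symmetric] exp_ge_zero w0)
    show "indicator {0..t} s * ennreal (exp (- q * s)) * ennreal (exp (\<eta> * (t - s)) * \<beta> ^ k * c)
        = ennreal w * (ennreal (exp (- (q + \<eta>) * s)) * indicator {0..t} s)"
      by (simp only: mult.assoc[of "indicator {0..t} s :: ennreal"] prod) (simp add: mult_ac)
  qed
  also have "\<dots> = ennreal w * (\<integral>\<^sup>+ s\<in>{0..t}. ennreal (exp (- (q + \<eta>) * s)) \<partial>lborel)"
    by (intro nn_integral_cmult) measurable
  also have "\<dots> \<le> ennreal w * ennreal (1 / (q + \<eta>))"
    by (intro mult_left_mono nn_integral_exp_neg_Icc_le pos t) auto
  also have "\<dots> \<le> ennreal \<kappa> * lyap (i, k) t"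
  proof -
    have "c / (q + \<eta>) \<le> \<kappa>"
      using lyap_contraction[OF i, of k] pos by (simp add: c_def q_def divide_le_eq)
    then have "exp (\<eta> * t) * \<beta> ^ k * (c / (q + \<eta>)) \<le> exp (\<eta> * t) * \<beta> ^ k * \<kappa>"
      using beta_gt_1 by (intro mult_left_mono) auto
    then have "ennreal (w * (1 / (q + \<eta>))) \<le> ennreal (\<kappa> * (exp (\<eta> * t) * \<beta> ^ k))"
      by (intro ennreal_leI) (simp add: w_def mult_ac)
    moreover have "ennreal w * ennreal (1 / (q + \<eta>)) = ennreal (w * (1 / (q + \<eta>)))"
      by (rule ennreal_mult[symmetric]) (use w0 pos in auto)
    ultimately show ?thesis
      using kappa_pos beta_gt_1 by (simp add: lyap_def ennreal_mult)
  qed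
  finally show ?thesis .
qed

definition fmom_bound :: "nat \<Rightarrow> real \<Rightarrow> real" where
  "fmom_bound m T = (\<Sum>l\<le>m. egf (gmaj (m - l)) T / (\<beta> - 1) ^ l)"

lemma fmom_bound_nonneg: "T \<ge> 0 \<Longrightarrow> fmom_bound m T \<ge> 0"
  unfolding fmom_bound_def using beta_gt_1 gmaj_nonneg
  by (intro sum_nonneg divide_nonneg_pos egf_nonneg exp_type_gmaj) auto

lemma fmom_le_lyap:
  assumes z: "fst z \<in> phases" and t: "0 \<le> \<tau>" "\<tau> \<le> T"
  shows "ennreal (fmom m z \<tau>) \<le> ennreal (fmom_bound m T) * lyap z \<tau>"
proof -
  obtain i k where zz: "z = (i, k)" by (cases z)
  have i: "i \<in> phases" using z zz by simp
  have "0 \<le> (\<theta> + real m * \<delta>) * \<tau>"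
    using theta_nonneg delta t by simp
  then have "exp (- (\<theta> + real m * \<delta>) * \<tau>) \<le> 1"
    by (simp only: mult_minus_left exp_le_one_iff neg_le_0_iff_le)
  then have "fmom m z \<tau> \<le> (\<Sum>l\<le>m. real (k choose l) * gfun (m - l) i \<tau>)"
    using i zz gfun_nonneg[OF i t(1)]
    by (simp add: fmom_def choose_comb_def mult_left_le_one_le sum_nonneg)
  also have "\<dots> \<le> (\<Sum>l\<le>m. \<beta> ^ k / (\<beta> - 1) ^ l * egf (gmaj (m - l)) T)"
    using binomial_le_power_div[OF beta_gt_1] gfun_le_egf_gmaj[OF i t] gfun_nonneg[OF i t(1)] beta_gt_1
    by (intro sum_mono mult_mono) auto
  also have "\<dots> = \<beta> ^ k * fmom_bound m T"
    by (simp add: fmom_bound_def sum_distrib_left)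
  also have "\<dots> \<le> fmom_bound m T * (exp (\<eta> * \<tau>) * \<beta> ^ k)"
  proof -
    have "fmom_bound m T * \<beta> ^ k * 1 \<le> fmom_bound m T * \<beta> ^ k * exp (\<eta> * \<tau>)"
      using Lambda_nonneg t beta_gt_1 fmom_bound_nonneg[of T m] by (intro mult_left_mono) (auto simp: \<eta>_def)
    then show ?thesis by (simp add: mult_ac)
  qed
  finally show ?thesis
    using zz fmom_bound_nonneg[of T m] t beta_gt_1 by (simp add: lyap_def ennreal_mult[symmetric] ennreal_leI)
qed

lemma feller_op_plus_lyap_le:
  assumes P: "\<And>z. P z \<in> borel_measurable borel" and i: "i \<in> phases" and t: "t \<ge> 0"
  shows "feller_op g (\<lambda>z s. P z s + c * lyap z s) (i, k) t
    \<le> feller_op g P (i, k) t + c * ennreal \<kappa> * lyap (i, k) t"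
proof -
  have "jump_op (\<lambda>z s. P z s + c * lyap z s) (i, k) t = jump_op P (i, k) t + c * jump_op lyap (i, k) t"
    using P lyap_measurable by (simp add: jump_op_add jump_op_cmult)
  also have "\<dots> \<le> jump_op P (i, k) t + c * (ennreal \<kappa> * lyap (i, k) t)"
    using jump_op_lyap_le[OF i t] by (intro add_left_mono mult_left_mono) auto
  finally show ?thesis
    unfolding feller_op_def by (simp add: add.assoc mult.assoc add_left_mono)
qed

lemma fmom_le_feller_iter:
  assumes "fst z \<in> phases" "0 \<le> \<tau>" "\<tau> \<le> T"
  shows "ennreal (fmom m z \<tau>)
    \<le> (feller_op (choose_level m) ^^ n) (\<lambda>_ _. 0) z \<tau> + ennreal (\<kappa> ^ n * fmom_bound m T) * lyap z \<tau>"
  using assms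
proof (induction n arbitrary: z \<tau>)
  case 0
  then show ?case using fmom_le_lyap by simp
next
  case (Suc n)
  obtain i k where z: "z = (i, k)" and i: "i \<in> phases" using Suc.prems by (cases z) auto
  define P where "P = (feller_op (choose_level m) ^^ n) (\<lambda>_ _. 0)"
  define c where "c = ennreal (\<kappa> ^ n * fmom_bound m T)"
  have "ennreal (fmom m z \<tau>) = feller_op (choose_level m) (\<lambda>z s. ennreal (fmom m z s)) z \<tau>"
    using feller_op_fmom[OF i Suc.prems(2), of m k] z by simp
  also have "\<dots> \<le> feller_op (choose_level m) (\<lambda>z s. P z s + c * lyap z s) z \<tau>"
    unfolding P_def c_def using Suc by (intro feller_op_mono jump_op_mono Suc.IH) auto
  also have "\<dots> \<le> feller_op (choose_level m) P z \<tau> + c * ennreal \<kappa> * lyap z \<tau>"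
    unfolding z P_def using i Suc.prems by (intro feller_op_plus_lyap_le feller_iter_measurable) auto
  also have "c * ennreal \<kappa> = ennreal (\<kappa> ^ Suc n * fmom_bound m T)"
    using kappa_pos fmom_bound_nonneg[of T m] Suc.prems by (simp add: c_def ennreal_mult[symmetric] mult_ac)
  finally show ?case
    by (simp add: P_def)
qed

lemma Pexp_eq_fmom:
  assumes z: "fst z \<in> phases" and t: "0 \<le> \<tau>"
  shows "Pexp (choose_level m) z \<tau> = ennreal (fmom m z \<tau>)"
proof (rule antisym)
  show "Pexp (choose_level m) z \<tau> \<le> ennreal (fmom m z \<tau>)"
    by (rule Pexp_le_fmom[OF z t])
  define w where "w = exp (\<eta> * \<tau>) * \<beta> ^ snd z"
  have w0: "w \<ge> 0" using beta_gt_1 by (simp add: w_def)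
  have le: "ennreal (fmom m z \<tau>) \<le> Pexp (choose_level m) z \<tau> + ennreal (\<kappa> ^ n * fmom_bound m \<tau> * w)" for n
  proof -
    have "ennreal (fmom m z \<tau>)
        \<le> (feller_op (choose_level m) ^^ n) (\<lambda>_ _. 0) z \<tau> + ennreal (\<kappa> ^ n * fmom_bound m \<tau>) * lyap z \<tau>"
      by (rule fmom_le_feller_iter[OF z t order_refl])
    also have "(feller_op (choose_level m) ^^ n) (\<lambda>_ _. 0) z \<tau> \<le> Pexp (choose_level m) z \<tau>"
      unfolding Pexp_eq_SUP_feller_iter by (rule SUP_upper) auto
    also have "ennreal (\<kappa> ^ n * fmom_bound m \<tau>) * lyap z \<tau> = ennreal (\<kappa> ^ n * fmom_bound m \<tau> * w)"
      unfolding lyap_def w_def[symmetric] using kappa_pos fmom_bound_nonneg[OF t, of m] w0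
      by (intro ennreal_mult[symmetric]) auto
    finally show ?thesis by simp
  qed
  have "(\<lambda>n. \<kappa> ^ n * fmom_bound m \<tau> * w) \<longlonglongrightarrow> 0 * fmom_bound m \<tau> * w"
    using kappa_pos kappa_lt_1 by (intro tendsto_mult_right LIMSEQ_power_zero) auto
  then have "(\<lambda>n. Pexp (choose_level m) z \<tau> + ennreal (\<kappa> ^ n * fmom_bound m \<tau> * w))
      \<longlonglongrightarrow> Pexp (choose_level m) z \<tau> + ennreal 0"
    by (intro tendsto_add tendsto_const tendsto_ennrealI) simp
  then show "ennreal (fmom m z \<tau>) \<le> Pexp (choose_level m) z \<tau>"
    using le by (intro LIMSEQ_le_const[where a="ennreal (fmom m z \<tau>)"]) auto
qed

section \<open>A scalar majorant\<close>

definition cweight :: "nat \<Rightarrow> real" where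
  "cweight l = cfac l * normD1"

text \<open>Replacing \<open>D\<close> by its row sums and \<open>D1\<close> by \<open>normD1\<close> in the construction of \<open>gfun\<close> gives
  the phase-independent majorant \<open>hmaj\<close>.\<close>
definition hmaj :: "nat \<Rightarrow> real \<Rightarrow> real" where
  "hmaj p t = exp (- (\<theta> + real p * \<delta>) * t) * egf (gmaj p) t"

definition dhmaj :: "nat \<Rightarrow> real \<Rightarrow> real" where
  "dhmaj p t = (\<Sum>l\<in>{1..p}. cweight l * exp (- (real l * \<delta>) * t) * hmaj (p - l) t)"

lemma cweight_nonneg: "cweight l \<ge> 0"
  unfolding cweight_def using cfac_nonneg normD1_nonneg by simp

lemma DERIV_egf_gmaj: "((\<lambda>t. egf (gmaj p) t) has_real_derivative
   ((\<theta> + real p * \<delta>) * egf (gmaj p) t + (\<Sum>l\<in>{1..p}. cweight l * egf (gmaj (p - l)) t))) (at t)"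
proof -
  have "egf (\<lambda>n. gmaj p (Suc n)) t
      = egf (\<lambda>n. (\<theta> + real p * \<delta>) * gmaj p n) t + egf (\<lambda>n. \<Sum>l\<in>{1..p}. cweight l * gmaj (p - l) n) t"
    unfolding gmaj.simps cweight_def
    by (intro egf_add exp_type_cmult exp_type_gmaj exp_type_sum) (auto simp: mult.assoc)
  also have "\<dots> = (\<theta> + real p * \<delta>) * egf (gmaj p) t + (\<Sum>l\<in>{1..p}. cweight l * egf (gmaj (p - l)) t)"
    by (simp add: egf_cmult egf_sum_cmult exp_type_gmaj)
  finally show ?thesis
    using DERIV_egf[OF exp_type_gmaj[of p], of t] by simp
qed

lemma DERIV_hmaj: "(hmaj p has_real_derivative dhmaj p t) (at t)"
proof -
  have "exp (- (\<theta> + real p * \<delta>) * t) * (cweight l * egf (gmaj (p - l)) t)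
      = cweight l * exp (- (real l * \<delta>) * t) * hmaj (p - l) t" if "l \<in> {1..p}" for l
  proof -
    have "exp (- (\<theta> + real p * \<delta>) * t) = exp (- (real l * \<delta>) * t) * exp (- (\<theta> + real (p - l) * \<delta>) * t)"
      using that by (simp add: of_nat_diff algebra_simps flip: exp_add)
    then show ?thesis by (simp add: hmaj_def)
  qed
  then have "exp (- (\<theta> + real p * \<delta>) * t) * (\<Sum>l\<in>{1..p}. cweight l * egf (gmaj (p - l)) t) = dhmaj p t"
    unfolding dhmaj_def sum_distrib_left by (intro sum.cong refl) auto
  then show ?thesis
    unfolding hmaj_def[abs_def]
    by (auto intro!: derivative_eq_intros DERIV_egf_gmaj simp: algebra_simps)
qed

lemma hmaj_zero: "hmaj 0 t = 1"
proof -
  have "gmaj 0 n = \<theta> ^ n" for n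
    by (induction n) auto
  then have "egf (gmaj 0) t = exp (\<theta> * t)"
    using exp_converges[of "\<theta> * t"] by (simp add: egf_def sums_iff power_mult_distrib field_simps)
  then show ?thesis by (simp add: hmaj_def flip: exp_add)
qed

lemma hmaj_nonneg: "t \<ge> 0 \<Longrightarrow> hmaj p t \<ge> 0"
  unfolding hmaj_def using gmaj_nonneg by (intro mult_nonneg_nonneg egf_nonneg exp_type_gmaj) auto

lemma hmaj_at_0: "hmaj p 0 = (if p = 0 then 1 else 0)"
  by (simp add: hmaj_def egf_0)

lemma dhmaj_identity:
  assumes IH: "\<And>p t. p < m \<Longrightarrow>
    real p * \<delta> * hmaj p t = (\<Sum>l\<in>{1..p}. (1 - exp (- (real l * \<delta>) * t)) * cweight l * hmaj (p - l) t)"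
  shows "real m * \<delta> * dhmaj m s = (\<Sum>l\<in>{1..m}. real l * \<delta> * exp (- (real l * \<delta>) * s) * cweight l * hmaj (m - l) s
      + (1 - exp (- (real l * \<delta>) * s)) * cweight l * dhmaj (m - l) s)"
proof -
  define u where "u l = exp (- (real l * \<delta>) * s)" for l
  have "(\<Sum>l\<in>{1..m}. (1 - u l) * cweight l * dhmaj (m - l) s)
      = (\<Sum>l\<in>{1..m}. \<Sum>l'\<in>{1..m - l}. (1 - u l) * cweight l * (cweight l' * u l' * hmaj (m - l - l') s))"
    by (simp add: dhmaj_def u_def sum_distrib_left)
  also have "\<dots> = (\<Sum>l'\<in>{1..m}. cweight l' * u l' * (\<Sum>l\<in>{1..m - l'}. (1 - u l) * cweight l * hmaj (m - l' - l) s))"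
    by (subst sum_triangle_swap) (simp add: sum_distrib_left mult_ac add_ac)
  also have "\<dots> = (\<Sum>l'\<in>{1..m}. cweight l' * u l' * (real (m - l') * \<delta> * hmaj (m - l') s))"
  proof (intro sum.cong refl)
    fix l' assume "l' \<in> {1..m}"
    then have "m - l' < m" by auto
    from IH[OF this, of s]
    show "cweight l' * u l' * (\<Sum>l\<in>{1..m - l'}. (1 - u l) * cweight l * hmaj (m - l' - l) s)
        = cweight l' * u l' * (real (m - l') * \<delta> * hmaj (m - l') s)"
      by (simp add: u_def)
  qed
  finally have "(\<Sum>l\<in>{1..m}. (1 - u l) * cweight l * dhmaj (m - l) s)
      = (\<Sum>l\<in>{1..m}. cweight l * u l * (real (m - l) * \<delta> * hmaj (m - l) s))" .
  moreover have "real m * \<delta> * dhmaj m s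
      = (\<Sum>l\<in>{1..m}. real l * \<delta> * u l * cweight l * hmaj (m - l) s
          + cweight l * u l * (real (m - l) * \<delta> * hmaj (m - l) s))"
    by (simp add: dhmaj_def u_def sum_distrib_left of_nat_diff algebra_simps)
  ultimately show ?thesis
    by (simp add: u_def sum.distrib)
qed

text \<open>Integrated form of the equation for \<open>hmaj\<close>: both sides vanish at \<open>t = 0\<close> and have the
  same derivative by \<open>dhmaj_identity\<close>.\<close>
lemma hmaj_identity:
  "real m * \<delta> * hmaj m t = (\<Sum>l\<in>{1..m}. (1 - exp (- (real l * \<delta>) * t)) * cweight l * hmaj (m - l) t)"
proof (induction m arbitrary: t rule: less_induct)
  case (less m)
  define D where "D t = real m * \<delta> * hmaj m t
      - (\<Sum>l\<in>{1..m}. (1 - exp (- (real l * \<delta>) * t)) * cweight l * hmaj (m - l) t)" for t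
  have "(D has_real_derivative real m * \<delta> * dhmaj m s
      - (\<Sum>l\<in>{1..m}. real l * \<delta> * exp (- (real l * \<delta>) * s) * cweight l * hmaj (m - l) s
      + (1 - exp (- (real l * \<delta>) * s)) * cweight l * dhmaj (m - l) s)) (at s)" for s
    unfolding D_def[abs_def] by (auto intro!: derivative_eq_intros DERIV_sum DERIV_hmaj simp: algebra_simps)
  then have "(D has_real_derivative 0) (at s)" for s
    using dhmaj_identity[OF less] by simp
  then have "D t = D 0"
    by (intro DERIV_isconst_all) blast
  then show ?case
    by (cases "m = 0") (simp_all add: D_def hmaj_at_0)
qed

definition moment_bound :: "nat \<Rightarrow> real" where
  "moment_bound m = 1 / fact m * (lam / (1 - lam)) ^ m * pochhammer (normD1 / (\<delta> * lam * (1 - lam))) m"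

lemma cweight_eq:
  assumes "l \<ge> 1"
  shows "cweight l = normD1 / (\<delta> * lam * (1 - lam)) * \<delta> * (lam / (1 - lam)) ^ l"
proof -
  obtain n where l: "l = Suc n" using assms by (cases l) auto
  have "normD1 / (\<delta> * lam * (1 - lam)) * \<delta> * (lam / (1 - lam)) ^ Suc n
      = normD1 * ((\<delta> * lam * lam ^ n) / (\<delta> * lam * ((1 - lam) * (1 - lam) ^ Suc n)))"
    by (simp add: power_divide)
  also have "(\<delta> * lam * lam ^ n) / (\<delta> * lam * ((1 - lam) * (1 - lam) ^ Suc n))
      = lam ^ n / ((1 - lam) * (1 - lam) ^ Suc n)"
    using lam0 lam1 delta by (subst mult_divide_mult_cancel_left) auto
  finally show ?thesis by (simp add: l cweight_def cfac_def mult_ac)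
qed

lemma sum_cweight_moment_bound:
  "(\<Sum>l\<in>{1..m}. cweight l * moment_bound (m - l)) = real m * \<delta> * moment_bound m"
proof -
  define x where "x = normD1 / (\<delta> * lam * (1 - lam))"
  define \<rho> where "\<rho> = lam / (1 - lam)"
  have "(\<Sum>l\<in>{1..m}. cweight l * moment_bound (m - l))
      = (\<Sum>l\<in>{1..m}. x * \<delta> * \<rho> ^ m * (pochhammer x (m - l) / fact (m - l)))"
    by (intro sum.cong refl)
      (auto simp: cweight_eq moment_bound_def x_def \<rho>_def power_add[symmetric])
  also have "\<dots> = x * \<delta> * \<rho> ^ m * (\<Sum>j<m. pochhammer x j / fact j)"
    unfolding sum_distrib_left[symmetric]
    by (intro arg_cong[where f="\<lambda>s. x * \<delta> * \<rho> ^ m * s"]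
        sum.reindex_bij_witness[where i="\<lambda>j. m - j" and j="\<lambda>l. m - l"]) auto
  also have "\<dots> = \<delta> * \<rho> ^ m * (real m * (pochhammer x m / fact m))"
    by (subst pochhammer_div_fact_recurrence) (simp add: mult_ac)
  also have "\<dots> = real m * \<delta> * moment_bound m"
    unfolding moment_bound_def x_def[symmetric] \<rho>_def[symmetric] by simp
  finally show ?thesis .
qed

lemma hmaj_le_moment_bound: "t \<ge> 0 \<Longrightarrow> hmaj m t \<le> moment_bound m"
proof (induction m rule: less_induct)
  case (less m)
  show ?case
  proof (cases "m = 0")
    case True
    then show ?thesis by (simp add: hmaj_zero moment_bound_def)
  next
    case False
    then have m1: "m \<ge> 1" by simp
    have "real m * \<delta> * hmaj m t = (\<Sum>l\<in>{1..m}. (1 - exp (- (real l * \<delta>) * t)) * cweight l * hmaj (m - l) t)"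
      by (rule hmaj_identity)
    also have "\<dots> \<le> (\<Sum>l\<in>{1..m}. cweight l * moment_bound (m - l))"
    proof (intro sum_mono)
      fix l assume l: "l \<in> {1..m}"
      have u: "0 \<le> 1 - exp (- (real l * \<delta>) * t)" "1 - exp (- (real l * \<delta>) * t) \<le> 1"
        using less.prems delta by auto
      have "(1 - exp (- (real l * \<delta>) * t)) * cweight l * hmaj (m - l) t \<le> 1 * cweight l * moment_bound (m - l)"
        using u cweight_nonneg less.IH[of "m - l"] l less.prems hmaj_nonneg[OF less.prems]
        by (intro mult_mono) (auto intro!: mult_nonneg_nonneg)
      then show "(1 - exp (- (real l * \<delta>) * t)) * cweight l * hmaj (m - l) t \<le> cweight l * moment_bound (m - l)"
        by simp
    qed
    also have "\<dots> = real m * \<delta> * moment_bound m"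
      by (rule sum_cweight_moment_bound)
    finally have "real m * \<delta> * hmaj m t \<le> real m * \<delta> * moment_bound m" .
    then show ?thesis using m1 delta by (simp add: mult_le_cancel_left_pos)
  qed
qed

lemma fmom_level_0_le_hmaj: "i \<in> phases \<Longrightarrow> t \<ge> 0 \<Longrightarrow> fmom m (i, 0) t \<le> hmaj m t"
proof -
  assume i: "i \<in> phases" and t: "t \<ge> 0"
  have "fmom m (i, 0) t = exp (- (\<theta> + real m * \<delta>) * t) * gfun m i t"
    using i sum_zero_choose[where m=m and f="\<lambda>l. gfun (m - l) i t"] by (simp add: fmom_def choose_comb_def)
  also have "\<dots> \<le> exp (- (\<theta> + real m * \<delta>) * t) * egf (gmaj m) t"
    unfolding gfun_def using gcoef_le_gmaj[OF i] t
    by (intro mult_left_mono egf_mono exp_type_gcoef[OF i] exp_type_gmaj) auto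
  finally show ?thesis by (simp add: hmaj_def)
qed

end

section \<open>Stationary factorial moments\<close>

locale stationary_burst_chain = burst_chain +
  fixes \<pi> :: "nat \<Rightarrow> real"
  assumes pi_nonneg: "\<And>i. i \<in> {1..N} \<Longrightarrow> \<pi> i \<ge> 0"
    and pi_sum: "(\<Sum>i\<in>{1..N}. \<pi> i) = 1"
    and pi_inv: "\<And>j. j \<in> {1..N} \<Longrightarrow> (\<Sum>i\<in>{1..N}. \<pi> i * Dmat N a b i j) = 0"
begin

definition stat_fmom :: "nat \<Rightarrow> real \<Rightarrow> real" where
  "stat_fmom m t = (\<Sum>i\<in>phases. \<pi> i * fmom m (i, 0) t)"

lemma piB_eq_stat_fmom: "t \<ge> 0 \<Longrightarrow> piB \<pi> a b \<delta> N m t = ennreal (stat_fmom m t)"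
proof -
  assume t: "t \<ge> 0"
  have "piB \<pi> a b \<delta> N m t = (\<Sum>i\<in>phases. ennreal (\<pi> i) * (\<Sum>j\<in>phases. Bcal a b \<delta> N m i j t))"
    unfolding piB_def by (simp add: sum_distrib_left)
  also have "\<dots> = (\<Sum>i\<in>phases. ennreal (\<pi> i * fmom m (i, 0) t))"
  proof (intro sum.cong refl)
    fix i assume i: "i \<in> phases"
    have "(\<Sum>j\<in>phases. Bcal a b \<delta> N m i j t) = ennreal (fmom m (i, 0) t)"
      using sum_Bcal_eq_Pexp[OF i] Pexp_eq_fmom[of "(i, 0)" t m] i t by simp
    then show "ennreal (\<pi> i) * (\<Sum>j\<in>phases. Bcal a b \<delta> N m i j t) = ennreal (\<pi> i * fmom m (i, 0) t)"
      using pi_nonneg[OF i] fmom_nonneg[OF t] by (simp add: ennreal_mult)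
  qed
  also have "\<dots> = ennreal (stat_fmom m t)"
    unfolding stat_fmom_def using pi_nonneg fmom_nonneg[OF t]
    by (intro sum_ennreal) (auto intro!: mult_nonneg_nonneg)
  finally show ?thesis .
qed

lemma sum_pi_Dmat_mult: "(\<Sum>i\<in>phases. \<pi> i * (\<Sum>j\<in>phases. Dmat N a b i j * v j)) = 0"
proof -
  have "(\<Sum>i\<in>phases. \<pi> i * (\<Sum>j\<in>phases. Dmat N a b i j * v j))
      = (\<Sum>j\<in>phases. (\<Sum>i\<in>phases. \<pi> i * Dmat N a b i j) * v j)"
    by (simp add: sum_distrib_left sum_distrib_right mult_ac) (rule sum.swap)
  then show ?thesis
    using pi_inv by simp
qed

text \<open>Invariance of \<open>\<pi>\<close> cancels the phase dynamics in the derivative of \<open>stat_fmom\<close>; only the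
  nonnegative burst terms remain.\<close>
lemma stat_fmom_mono:
  assumes "0 \<le> s" "s \<le> t"
  shows "stat_fmom m s \<le> stat_fmom m t"
proof (rule deriv_nonneg_imp_mono[where g="stat_fmom m"])
  fix x assume x: "x \<in> {s..t}"
  show "(stat_fmom m has_real_derivative (\<Sum>i\<in>phases. \<pi> i * dfmom m (i, 0) x)) (at x)"
    unfolding stat_fmom_def[abs_def] by (intro DERIV_sum DERIV_cmult DERIV_fmom) auto
next
  fix x assume x: "x \<in> {s..t}"
  have "(\<Sum>i\<in>phases. \<pi> i * dfmom m (i, 0) x) = exp (- (\<theta> + real m * \<delta>) * x)
      * ((\<Sum>i\<in>phases. \<pi> i * (\<Sum>j\<in>phases. Dmat N a b i j * gfun m j x))
       + (\<Sum>i\<in>phases. \<pi> i * (\<Sum>l\<in>{1..m}. cfac l * (\<Sum>j\<in>phases. D1 i j * gfun (m - l) j x))))"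
    unfolding sum_distrib_left[of "exp _"] distrib_left[of "exp _"] sum.distrib[symmetric]
    by (intro sum.cong refl) (simp add: dfmom_level_0 algebra_simps)
  also have "\<dots> \<ge> 0"
    unfolding sum_pi_Dmat_mult add_0_left using x assms
    by (intro mult_nonneg_nonneg sum_nonneg exp_ge_zero pi_nonneg cfac_nonneg D1_nonneg gfun_nonneg) auto
  finally show "(\<Sum>i\<in>phases. \<pi> i * dfmom m (i, 0) x) \<ge> 0" .
qed (fact assms)

lemma stat_fmom_le_moment_bound: "t \<ge> 0 \<Longrightarrow> stat_fmom m t \<le> moment_bound m"
proof -
  assume t: "t \<ge> 0"
  have "stat_fmom m t \<le> (\<Sum>i\<in>phases. \<pi> i * moment_bound m)"
    unfolding stat_fmom_def
  proof (intro sum_mono mult_left_mono)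
    fix i assume i: "i \<in> phases"
    show "fmom m (i, 0) t \<le> moment_bound m"
      using fmom_level_0_le_hmaj[OF i t, of m] hmaj_le_moment_bound[OF t, of m] by linarith
    show "0 \<le> \<pi> i" using pi_nonneg[OF i] .
  qed
  also have "\<dots> = moment_bound m"
    using pi_sum by (simp add: sum_distrib_right[symmetric])
  finally show ?thesis .
qed

lemma piB_tendsto_le: "\<exists>L. (piB \<pi> a b \<delta> N m \<longlongrightarrow> L) at_top \<and> L \<le> ennreal (moment_bound m)"
proof -
  define L where "L = (SUP t\<in>{0..}. ennreal (stat_fmom m t))"
  have ev: "\<forall>\<^sub>F t in at_top. piB \<pi> a b \<delta> N m t = ennreal (stat_fmom m t)"
    using eventually_ge_at_top[of "0::real"] by eventually_elim (simp add: piB_eq_stat_fmom)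
  have "(piB \<pi> a b \<delta> N m \<longlongrightarrow> L) at_top"
  proof (rule increasing_tendsto)
    show "\<forall>\<^sub>F t in at_top. piB \<pi> a b \<delta> N m t \<le> L"
      using ev eventually_ge_at_top[of "0::real"]
      by eventually_elim (auto simp: L_def intro!: SUP_upper)
  next
    fix x assume "x < L"
    then obtain t0 where t0: "t0 \<ge> 0" "x < ennreal (stat_fmom m t0)"
      unfolding L_def by (auto simp: less_SUP_iff)
    show "\<forall>\<^sub>F t in at_top. x < piB \<pi> a b \<delta> N m t"
      using ev eventually_ge_at_top[of t0]
    proof eventually_elim
      case (elim t)
      then show ?case
        using t0 stat_fmom_mono[of t0 t m] order_less_le_trans[OF t0(2) ennreal_leI] by auto
    qed
  qed
  moreover have "L \<le> ennreal (moment_bound m)"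
    unfolding L_def by (intro SUP_least ennreal_leI stat_fmom_le_moment_bound) auto
  ultimately show ?thesis by blast
qed

end

theorem mainTheorem7:
  fixes N :: nat and \<delta> lam :: real
    and a :: "nat \<Rightarrow> nat \<Rightarrow> real" and b :: "nat \<Rightarrow> nat \<Rightarrow> nat \<Rightarrow> real"
    and \<pi> :: "nat \<Rightarrow> real"
  assumes N: "N \<ge> 1" and delta: "\<delta> > 0"
    and a_nonneg: "\<And>i j. i \<in> {1..N} \<Longrightarrow> j \<in> {1..N} \<Longrightarrow> i \<noteq> j \<Longrightarrow> a i j \<ge> 0"
    and b_nonneg: "\<And>r i j. r \<ge> 1 \<Longrightarrow> i \<in> {1..N} \<Longrightarrow> j \<in> {1..N} \<Longrightarrow> b r i j \<ge> 0"
    and irred: "irreducible_gen N (Dmat N a b)"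
    and lam: "0 < lam" "lam < 1"
    and geom: "\<And>r i j. r \<ge> 1 \<Longrightarrow> i \<in> {1..N} \<Longrightarrow> j \<in> {1..N} \<Longrightarrow> b r i j = lam ^ (r - 1) * b 1 i j"
    and pi_nonneg: "\<And>i. i \<in> {1..N} \<Longrightarrow> \<pi> i \<ge> 0"
    and pi_sum: "(\<Sum>i\<in>{1..N}. \<pi> i) = 1"
    and pi_inv: "\<And>j. j \<in> {1..N} \<Longrightarrow> (\<Sum>i\<in>{1..N}. \<pi> i * Dmat N a b i j) = 0"
  shows "(\<forall>r\<ge>1. \<forall>i\<in>{1..N}. \<forall>j\<in>{1..N}.
            Cmat b r i j = lam ^ (r - 1) / (1 - lam) ^ (r + 1) * b 1 i j)
       \<and> (\<forall>m::nat. \<exists>L. (piB \<pi> a b \<delta> N m \<longlongrightarrow> L) at_top \<and>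
            L \<le> ennreal (1 / fact m * (lam / (1 - lam)) ^ m
                  * pochhammer (norm_inf N (b 1) / (\<delta> * lam * (1 - lam))) m))"
proof -
  interpret stationary_burst_chain N \<delta> lam a b \<pi>
    by (intro stationary_burst_chain.intro burst_chain.intro stationary_burst_chain_axioms.intro)
      (fact assms)+
  show ?thesis
    using Cmat_geometric piB_tendsto_le unfolding moment_bound_def normD1_def by blast
qed

end
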